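(* Let $A\in\mathbb{R}_{\max}^{n\times n}$ with $\lambda(A)\ne-\infty$, $g=g(\mathrm{crit}(A))$, and let $A_1,B_1,A_2$ be built from $A$ and $g$. Assume that $A_2<CSR[A_1]$, that $\mathrm{crit}(A)$ is strongly connected and contains the cycle $(1,2,\dots,g,1)$, that $g$ and $n$ are coprime, and that $(j-i-1)\lambda(A)+(B_1)_{ij}<(A_1^{\,j-i})_{ij}$ whenever $i>g$, $j>i+1$ and $j\equiv i+1\pmod g$. Then $CS^tR[A_1]=CS^tR[A_1\oplus B_1]$ for all $t\ge1$.
   Context: Max-plus semiring $\mathbb{R}_{\max}=\mathbb{R}\cup\{-\infty\}$ with $a\oplus b=\max(a,b)$, $a\otimes b=a+b$; $(A\oplus B)_{ij}=\max(a_{ij},b_{ij})$, $(AB)_{ij}=\max_k(a_{ik}+b_{kj})$; $A^t$ is the $t$-th max-plus power, $A^0=I$. $\mathcal{D}(A)$ is the digraph on $\{1,\dots,n\}$ with arc $(i,j)$ of weight $a_{ij}$ whenever $a_{ij}\ne-\infty$; walks, length (number of arcs), weight (sum of arc weights), cycles as usual. $\lambda(A)$ is the maximal cycle mean ($-\infty$ if no cycle). $\mathrm{crit}(A)$ is the subgraph of all nodes and arcs of cycles attaining $\lambda(A)$; its nodes are critical. $g(\mathrm{crit}(A))$ is the maximum over strongly connected components of $\mathrm{crit}(A)$ of their minimal cycle length. The cyclicity of $\mathrm{crit}(A)$ is the lcm over components of the gcd of their cycle lengths. CSR terms: if $\lambda=\lambda(A)\ne-\infty$, with $\gamma$ the cyclicity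 of $\mathrm{crit}(A)$, $A_\lambda$ equal to $A$ with $\lambda$ subtracted from every finite entry, $M=I\oplus N\oplus\dots\oplus N^{n-1}$ where $N=A_\lambda^\gamma$: $c_{ij}=m_{ij}$ if $j$ critical, else $-\infty$; $r_{ij}=m_{ij}$ if $i$ critical, else $-\infty$; $s_{ij}=a_{ij}$ if $(i,j)$ is an arc of $\mathrm{crit}(A)$, else $-\infty$; $CS^tR[A]$ is the product $CS^tR$ and $CSR[A]=CS^1R[A]$. If $\lambda(A)=-\infty$, $CS^tR[A]$ is the all-$(-\infty)$ matrix. Strict order: for matrices or scalars, $X<Y$ means $x_{ij}\le y_{ij}$ for all $i,j$, with $x_{ij}=y_{ij}$ only if both equal $-\infty$. Given $A$ and $g$: $(A_1)_{ij}=a_{ij}$ if ($j=i+1$ and $1\le i\le n-1$) or $(i,j)\in\{(n,1),(g,1)\}$, and $-\infty$ otherwise; $(B_1)_{ij}=a_{ij}$ if $i>g$, $j>g$ and $j\equiv i+1\pmod g$, and $-\infty$ otherwise; $(A_2)_{ij}=-\infty$ if $(A_1\oplus B_1)_{ij}>-\infty$, and $a_{ij}$ otherwise. *)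

theory Defs
  imports "HOL-Library.Extended_Real"
begin

text \<open>Max-plus matrices of size n are functions nat \<Rightarrow> nat \<Rightarrow> ereal, only the
  entries with indices in {1..n} are relevant; -\<infinity> is the max-plus zero.\<close>

type_synonym mpmat = "nat \<Rightarrow> nat \<Rightarrow> ereal"

definition mp_one :: mpmat where
  "mp_one i j = (if i = j then 0 else -\<infinity>)"

definition mp_mult :: "nat \<Rightarrow> mpmat \<Rightarrow> mpmat \<Rightarrow> mpmat" where
  "mp_mult n A B i j = (SUP k\<in>{1..n}. A i k + B k j)"

definition mp_add :: "mpmat \<Rightarrow> mpmat \<Rightarrow> mpmat" where
  "mp_add A B i j = max (A i j) (B i j)"

fun mp_pow :: "nat \<Rightarrow> mpmat \<Rightarrow> nat \<Rightarrow> mpmat" where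
  "mp_pow n A 0 = mp_one"
| "mp_pow n A (Suc t) = mp_mult n (mp_pow n A t) A"

definition sless :: "ereal \<Rightarrow> ereal \<Rightarrow> bool" where
  "sless x y \<longleftrightarrow> x \<le> y \<and> (x = y \<longrightarrow> x = -\<infinity>)"

definition mp_sless :: "nat \<Rightarrow> mpmat \<Rightarrow> mpmat \<Rightarrow> bool" where
  "mp_sless n X Y \<longleftrightarrow> (\<forall>i\<in>{1..n}. \<forall>j\<in>{1..n}. sless (X i j) (Y i j))"

definition is_walk :: "nat \<Rightarrow> mpmat \<Rightarrow> nat list \<Rightarrow> bool" where
  "is_walk n A w \<longleftrightarrow> length w \<ge> 2 \<and> set w \<subseteq> {1..n} \<and>
     (\<forall>l < length w - 1. A (w ! l) (w ! Suc l) \<noteq> -\<infinity>)"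

definition wlen :: "nat list \<Rightarrow> nat" where
  "wlen w = length w - 1"

definition wweight :: "mpmat \<Rightarrow> nat list \<Rightarrow> ereal" where
  "wweight A w = (\<Sum>l<wlen w. A (w ! l) (w ! Suc l))"

definition is_cycle :: "nat \<Rightarrow> mpmat \<Rightarrow> nat list \<Rightarrow> bool" where
  "is_cycle n A c \<longleftrightarrow> is_walk n A c \<and> hd c = last c \<and> distinct (butlast c)"

definition cmean :: "mpmat \<Rightarrow> nat list \<Rightarrow> ereal" where
  "cmean A c = wweight A c / ereal (real (wlen c))"

definition mcm :: "nat \<Rightarrow> mpmat \<Rightarrow> ereal" where
  "mcm n A = Sup {cmean A c | c. is_cycle n A c}"

definition is_crit_cycle :: "nat \<Rightarrow> mpmat \<Rightarrow> nat list \<Rightarrow> bool" where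
  "is_crit_cycle n A c \<longleftrightarrow> is_cycle n A c \<and> cmean A c = mcm n A"

definition crit_arc :: "nat \<Rightarrow> mpmat \<Rightarrow> nat \<Rightarrow> nat \<Rightarrow> bool" where
  "crit_arc n A i j \<longleftrightarrow>
     (\<exists>c. is_crit_cycle n A c \<and> (\<exists>l < wlen c. c ! l = i \<and> c ! Suc l = j))"

definition crit_node :: "nat \<Rightarrow> mpmat \<Rightarrow> nat \<Rightarrow> bool" where
  "crit_node n A i \<longleftrightarrow> (\<exists>c. is_crit_cycle n A c \<and> i \<in> set c)"

definition crit_rel :: "nat \<Rightarrow> mpmat \<Rightarrow> (nat \<times> nat) set" where
  "crit_rel n A = {(i, j). crit_arc n A i j}"

definition crit_strongly_connected :: "nat \<Rightarrow> mpmat \<Rightarrow> bool" where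
  "crit_strongly_connected n A \<longleftrightarrow>
     (\<forall>i j. crit_node n A i \<longrightarrow> crit_node n A j \<longrightarrow> (i, j) \<in> (crit_rel n A)\<^sup>*)"

definition crit_comp :: "nat \<Rightarrow> mpmat \<Rightarrow> nat \<Rightarrow> nat set" where
  "crit_comp n A i = {j. crit_node n A j \<and> (i, j) \<in> (crit_rel n A)\<^sup>* \<and> (j, i) \<in> (crit_rel n A)\<^sup>*}"

definition crit_comps :: "nat \<Rightarrow> mpmat \<Rightarrow> nat set set" where
  "crit_comps n A = {crit_comp n A i | i. crit_node n A i}"

definition comp_cycle_lens :: "nat \<Rightarrow> mpmat \<Rightarrow> nat set \<Rightarrow> nat set" where
  "comp_cycle_lens n A C = {wlen c | c. is_cycle n A c \<and> set c \<subseteq> C \<and>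
      (\<forall>l < wlen c. crit_arc n A (c ! l) (c ! Suc l))}"

definition g_crit :: "nat \<Rightarrow> mpmat \<Rightarrow> nat" where
  "g_crit n A = Max ((\<lambda>C. Min (comp_cycle_lens n A C)) ` crit_comps n A)"

definition cyclicity_crit :: "nat \<Rightarrow> mpmat \<Rightarrow> nat" where
  "cyclicity_crit n A = Lcm ((\<lambda>C. Gcd (comp_cycle_lens n A C)) ` crit_comps n A)"

definition A_lam :: "nat \<Rightarrow> mpmat \<Rightarrow> mpmat" where
  "A_lam n A i j = A i j - mcm n A"

definition M_mat :: "nat \<Rightarrow> mpmat \<Rightarrow> mpmat" where
  "M_mat n A i j = (SUP k\<in>{..<n}. mp_pow n (mp_pow n (A_lam n A) (cyclicity_crit n A)) k i j)"

definition C_mat :: "nat \<Rightarrow> mpmat \<Rightarrow> mpmat" where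
  "C_mat n A i j = (if crit_node n A j then M_mat n A i j else -\<infinity>)"

definition R_mat :: "nat \<Rightarrow> mpmat \<Rightarrow> mpmat" where
  "R_mat n A i j = (if crit_node n A i then M_mat n A i j else -\<infinity>)"

definition S_mat :: "nat \<Rightarrow> mpmat \<Rightarrow> mpmat" where
  "S_mat n A i j = (if crit_arc n A i j then A i j else -\<infinity>)"

definition CSR :: "nat \<Rightarrow> mpmat \<Rightarrow> nat \<Rightarrow> mpmat" where
  "CSR n A t = (if mcm n A = -\<infinity> then (\<lambda>i j. -\<infinity>)
     else mp_mult n (mp_mult n (C_mat n A) (mp_pow n (S_mat n A) t)) (R_mat n A))"

definition A1_mat :: "nat \<Rightarrow> nat \<Rightarrow> mpmat \<Rightarrow> mpmat" where
  "A1_mat n g A i j = (if (j = i + 1 \<and> 1 \<le> i \<and> i \<le> n - 1) \<or> (i, j) = (n, 1) \<or> (i, j) = (g, 1)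
                       then A i j else -\<infinity>)"

definition B1_mat :: "nat \<Rightarrow> mpmat \<Rightarrow> mpmat" where
  "B1_mat g A i j = (if i > g \<and> j > g \<and> j mod g = (i + 1) mod g then A i j else -\<infinity>)"

definition A2_mat :: "nat \<Rightarrow> nat \<Rightarrow> mpmat \<Rightarrow> mpmat" where
  "A2_mat n g A i j = (if mp_add (A1_mat n g A) (B1_mat g A) i j > -\<infinity> then -\<infinity> else A i j)"

end

theory Submission
  imports Defs
begin

text \<open>
  Write \<open>X = A\<^sub>1\<close> and \<open>Y = A\<^sub>1 \<oplus> B\<^sub>1\<close>. Both agree with \<open>A\<close> on the critical cycle
  \<open>(1, \<dots>, g, 1)\<close>, so they have the maximal cycle mean \<open>\<lambda>\<close> of \<open>A\<close>, and their critical cycles are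
  critical in \<open>A\<close>. The hypothesis \<open>A\<^sub>2 < CSR[A\<^sub>1]\<close> forbids critical arcs outside \<open>Y\<close>, and the
  hypothesis on \<open>A\<^sub>1\<^sup>j\<^sup>-\<^sup>i\<close> forbids critical forward jumps of \<open>B\<^sub>1\<close>: every critical arc of \<open>A\<close>
  climbs by one or leads back.

  If \<open>(n, 1)\<close> is critical, the Hamiltonian cycle \<open>(1, \<dots>, n, 1)\<close> is critical. The normalised
  weights of its prefixes form a potential that is tight on the arcs of \<open>X\<close> and an upper bound on
  those of \<open>Y\<close>; as \<open>g\<close> and \<open>n\<close> are coprime the cyclicity is \<open>1\<close>, and both \<open>CS\<^sup>tR\<close> terms equal
  \<open>\<lambda> t + pot b - pot a\<close>.

  Otherwise strong connectivity confines \<open>crit(A)\<close>, and with it the critical graphs of \<open>X\<close> and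
  \<open>Y\<close>, to the cycle \<open>(1, \<dots>, g, 1)\<close>. It remains to compare the entries of \<open>C\<close> and \<open>R\<close> with an
  end in \<open>{1, \<dots>, g}\<close>: a walk in \<open>Y\<close> of length divisible by \<open>g\<close> becomes a walk in \<open>X\<close> with the
  same ends, length divisible by \<open>g\<close> and no smaller normalised weight, by replacing forward
  \<open>B\<^sub>1\<close>-jumps with walks in \<open>A\<^sub>1\<close> and cutting out the closed segments around backward
  \<open>B\<^sub>1\<close>-arcs, whose lengths are multiples of \<open>g\<close>.
\<close>

lemma finite_SUP_attained:
  fixes F :: "'b \<Rightarrow> 'a::complete_linorder"
  assumes "finite S" "S \<noteq> {}"
  shows "\<exists>x\<in>S. (SUP y\<in>S. F y) = F x"
proof -
  have "(SUP y\<in>S. F y) = Max (F ` S)" using assms by (simp add: cSup_eq_Max)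
  moreover have "Max (F ` S) \<in> F ` S" using assms by simp
  ultimately show ?thesis by auto
qed

lemma finite_SUP_not_PInf:
  fixes F :: "'b \<Rightarrow> ereal"
  assumes "finite S" "\<forall>x\<in>S. F x \<noteq> \<infinity>"
  shows "(SUP y\<in>S. F y) \<noteq> \<infinity>"
proof (cases "S = {}")
  case True thus ?thesis by (simp add: bot_ereal_def)
next
  case False thus ?thesis using finite_SUP_attained[OF assms(1) False, of F] assms(2) by auto
qed

lemma ereal_le_by_real_lower_bounds:
  fixes x y :: ereal
  assumes "x \<noteq> \<infinity>" "\<And>c. ereal c \<le> x \<Longrightarrow> ereal c \<le> y"
  shows "x \<le> y"
  using assms by (cases x) auto

lemma ereal_le_real_by_lower_bounds:
  fixes x :: ereal
  assumes "x \<noteq> \<infinity>" "\<And>c. ereal c \<le> x \<Longrightarrow> c \<le> d"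
  shows "x \<le> ereal d"
  using assms by (cases x) auto

lemma ereal_ge_real_obtain:
  fixes x :: ereal
  assumes "x \<noteq> \<infinity>" "ereal c \<le> x"
  obtains r where "x = ereal r" "c \<le> r"
  using assms by (cases x) auto

lemma ereal_add_ge_real_obtain:
  fixes x y :: ereal
  assumes "x \<noteq> \<infinity>" "y \<noteq> \<infinity>" "ereal c \<le> x + y"
  obtains u v where "x = ereal u" "y = ereal v" "c \<le> u + v"
  using assms by (cases x; cases y) auto

lemma ereal_real_finite: "(x::ereal) \<noteq> \<infinity> \<Longrightarrow> x \<noteq> -\<infinity> \<Longrightarrow> ereal (real_of_ereal x) = x"
  by (cases x) auto

lemma ereal_minus_MInf: "(x::ereal) - ereal r = -\<infinity> \<longleftrightarrow> x = -\<infinity>" by (cases x) auto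
lemma ereal_minus_PInf: "(x::ereal) - ereal r = \<infinity> \<longleftrightarrow> x = \<infinity>" by (cases x) auto

lemma mod_add_inj:
  fixes m a k k' :: nat
  assumes "k < m" "k' < m" "(a + k) mod m = (a + k') mod m"
  shows "k = k'"
proof -
  { fix u v :: nat assume uv: "u < m" "v < m" "u \<le> v" "(a + u) mod m = (a + v) mod m"
    hence "m dvd (a + v) - (a + u)" using mod_eq_dvd_iff_nat[of "a + u" "a + v" m] by simp
    hence "m dvd v - u" by simp
    moreover have "v - u < m" using uv by simp
    ultimately have "v - u = 0" using dvd_imp_le by (metis neq0_conv not_less)
    hence "u = v" using uv by simp }
  thus ?thesis using assms by (metis linorder_le_cases)
qed

lemma sum_rotate1:
  fixes H :: "nat \<Rightarrow> real"
  assumes "m > 0"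
  shows "(\<Sum>k<m. H (Suc k mod m)) = (\<Sum>k<m. H k)"
proof -
  obtain m' where m: "m = Suc m'" using assms by (cases m) auto
  have "(\<Sum>k<Suc m'. H (Suc k mod Suc m')) = (\<Sum>k<m'. H (Suc k mod Suc m')) + H (Suc m' mod Suc m')"
    by simp
  also have "(\<Sum>k<m'. H (Suc k mod Suc m')) = (\<Sum>k<m'. H (Suc k))"
    by (rule sum.cong) auto
  also have "\<dots> = (\<Sum>k<Suc m'. H k) - H 0" using sum.lessThan_Suc_shift[of H m'] by linarith
  finally show ?thesis using m by simp
qed

lemma sum_rotate:
  fixes F :: "nat \<Rightarrow> real"
  assumes "m > 0"
  shows "(\<Sum>k<m. F ((s + k) mod m)) = (\<Sum>k<m. F k)"
proof (induction s)
  case 0 thus ?case by (intro sum.cong) auto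
next
  case (Suc s)
  have "(\<Sum>k<m. F ((Suc s + k) mod m)) = (\<Sum>k<m. (\<lambda>i. F ((s + i) mod m)) (Suc k mod m))"
    by (intro sum.cong) (auto simp: mod_add_right_eq)
  also have "\<dots> = (\<Sum>k<m. F ((s + k) mod m))" by (rule sum_rotate1[OF assms])
  finally show ?case using Suc by simp
qed

lemma mod_steps:
  fixes g :: nat
  assumes "\<forall>r<M. h (Suc r) mod g = (h r + 1) mod g"
  shows "h M mod g = (h 0 + M) mod g"
  using assms
proof (induction M)
  case 0 thus ?case by simp
next
  case (Suc M)
  hence "h M mod g = (h 0 + M) mod g" by simp
  moreover have "h (Suc M) mod g = (h M + 1) mod g" using Suc.prems by simp
  ultimately have "h (Suc M) mod g = Suc ((h 0 + M) mod g) mod g"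
    by (metis Suc_eq_plus1 mod_Suc_eq)
  also have "\<dots> = Suc (h 0 + M) mod g" by (rule mod_Suc_eq)
  finally show ?case by simp
qed

lemma mod_steps_closed:
  fixes g :: nat
  assumes "\<forall>r<M. h (Suc r) mod g = (h r + 1) mod g" "h M = h 0"
  shows "M mod g = 0"
proof -
  have "(h 0 + M) mod g = h 0 mod g" using mod_steps[OF assms(1)] assms(2) by simp
  hence "g dvd (h 0 + M) - h 0" using mod_eq_dvd_iff_nat[of "h 0" "h 0 + M" g] by simp
  thus ?thesis by simp
qed

lemma rtrancl_crossing:
  assumes "(a, b) \<in> R\<^sup>*" "\<not> Q a" "Q b"
  shows "\<exists>x y. (x, y) \<in> R \<and> \<not> Q x \<and> Q y"
  using assms by (induction rule: rtrancl_induct) auto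

text \<open>Walks are handled as functions \<open>f\<close> on \<open>{0..L}\<close> rather than as node lists; their weights
  are real, which is meaningful for matrices without \<open>\<infinity>\<close> entries.\<close>

definition walk :: "nat \<Rightarrow> mpmat \<Rightarrow> (nat \<Rightarrow> nat) \<Rightarrow> nat \<Rightarrow> bool" where
  "walk n P f L \<longleftrightarrow> (\<forall>k\<le>L. f k \<in> {1..n}) \<and> (\<forall>k<L. P (f k) (f (Suc k)) \<noteq> -\<infinity>)"

definition weight :: "mpmat \<Rightarrow> (nat \<Rightarrow> nat) \<Rightarrow> nat \<Rightarrow> real" where
  "weight P f L = (\<Sum>k<L. real_of_ereal (P (f k) (f (Suc k))))"

definition walk_append :: "(nat \<Rightarrow> nat) \<Rightarrow> nat \<Rightarrow> (nat \<Rightarrow> nat) \<Rightarrow> nat \<Rightarrow> nat" where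
  "walk_append f L h = (\<lambda>k. if k \<le> L then f k else h (k - L))"

definition walk_from :: "(nat \<Rightarrow> nat) \<Rightarrow> nat \<Rightarrow> nat \<Rightarrow> nat" where
  "walk_from f p = (\<lambda>k. f (k + p))"

lemma weight_0[simp]: "weight P f 0 = 0" by (simp add: weight_def)
lemma weight_Suc: "weight P f (Suc L) = weight P f L + real_of_ereal (P (f L) (f (Suc L)))"
  by (simp add: weight_def)

lemma weight_cong: "(\<And>k. k \<le> L \<Longrightarrow> f k = h k) \<Longrightarrow> weight P f L = weight P h L"
  unfolding weight_def by (intro sum.cong) auto

lemma walk_cong: "(\<And>k. k \<le> L \<Longrightarrow> f k = h k) \<Longrightarrow> walk n P f L = walk n P h L"
  unfolding walk_def by (metis Suc_leI less_imp_le_nat)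

lemma walk_0: "walk n P f 0 \<longleftrightarrow> f 0 \<in> {1..n}"
  unfolding walk_def by auto

lemma walk_prefix: "walk n P f L \<Longrightarrow> L' \<le> L \<Longrightarrow> walk n P f L'"
  unfolding walk_def by auto

lemma walk_append_0[simp]: "walk_append f L h 0 = f 0" by (simp add: walk_append_def)
lemma walk_append_low: "k \<le> L \<Longrightarrow> walk_append f L h k = f k" by (simp add: walk_append_def)
lemma walk_append_end: "f L = h 0 \<Longrightarrow> walk_append f L h (L + L2) = h L2" by (simp add: walk_append_def)

lemma walk_from_apply[simp]: "walk_from f p k = f (k + p)" by (simp add: walk_from_def)

lemma weight_split: "p \<le> L \<Longrightarrow> weight P f L = weight P f p + weight P (walk_from f p) (L - p)"
proof (induction L)
  case 0 thus ?case by simp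
next
  case (Suc L)
  show ?case
  proof (cases "p = Suc L")
    case True thus ?thesis by simp
  next
    case False
    hence "p \<le> L" using Suc by simp
    hence "Suc L - p = Suc (L - p)" by simp
    moreover have "L - p + p = L" using \<open>p \<le> L\<close> by simp
    ultimately show ?thesis using Suc.IH[OF \<open>p \<le> L\<close>] by (simp add: weight_Suc)
  qed
qed

lemma walk_walk_from: "walk n P f L \<Longrightarrow> p \<le> L \<Longrightarrow> walk n P (walk_from f p) (L - p)"
  unfolding walk_def by auto

lemma weight_append: "f L1 = h 0 \<Longrightarrow> weight P (walk_append f L1 h) (L1 + L2) = weight P f L1 + weight P h L2"
proof -
  assume e: "f L1 = h 0"
  have "weight P (walk_append f L1 h) (L1 + L2) = weight P (walk_append f L1 h) L1 + weight P (walk_from (walk_append f L1 h) L1) L2"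
    using weight_split[of L1 "L1+L2" P "walk_append f L1 h"] by simp
  moreover have "weight P (walk_append f L1 h) L1 = weight P f L1" by (rule weight_cong) (simp add: walk_append_low)
  moreover have "weight P (walk_from (walk_append f L1 h) L1) L2 = weight P h L2"
    by (rule weight_cong) (metis walk_from_apply add.commute walk_append_end[of f L1 h, OF e])
  ultimately show ?thesis by simp
qed

lemma walk_walk_append: "walk n P f L1 \<Longrightarrow> walk n P h L2 \<Longrightarrow> f L1 = h 0 \<Longrightarrow> walk n P (walk_append f L1 h) (L1 + L2)"
  unfolding walk_def
proof safe
  fix k assume a: "\<forall>k\<le>L1. f k \<in> {1..n}" "\<forall>k<L1. P (f k) (f (Suc k)) \<noteq> -\<infinity>"
     "\<forall>k\<le>L2. h k \<in> {1..n}" "\<forall>k<L2. P (h k) (h (Suc k)) \<noteq> -\<infinity>" "f L1 = h 0"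
  { assume "k \<le> L1 + L2"
    thus "walk_append f L1 h k \<in> {1..n}" using a by (cases "k \<le> L1") (auto simp: walk_append_def) }
  { assume "k < L1 + L2" "P (walk_append f L1 h k) (walk_append f L1 h (Suc k)) = -\<infinity>"
    thus False using a
      by (cases "k < L1"; cases "k = L1") (auto simp: walk_append_def Suc_diff_le) }
qed

definition walk_cut :: "(nat \<Rightarrow> nat) \<Rightarrow> nat \<Rightarrow> nat \<Rightarrow> nat \<Rightarrow> nat" where
  "walk_cut f p q = walk_append f p (walk_from f q)"

lemma walk_cut:
  assumes f: "walk n P f L" and pq: "p \<le> q" "q \<le> L" "f p = f q"
  shows "walk n P (walk_from f p) (q - p)"
    and "walk n P (walk_cut f p q) (p + (L - q))"
    and "walk_cut f p q 0 = f 0"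
    and "walk_cut f p q (p + (L - q)) = f L"
    and "weight P f L = weight P (walk_from f p) (q - p) + weight P (walk_cut f p q) (p + (L - q))"
proof -
  have e: "f p = walk_from f q 0" using pq by simp
  show "walk n P (walk_from f p) (q - p)" using walk_walk_from[OF walk_prefix[OF f pq(2)] pq(1)] .
  show "walk n P (walk_cut f p q) (p + (L - q))"
    unfolding walk_cut_def by (rule walk_walk_append[OF walk_prefix[OF f] walk_walk_from[OF f pq(2)] e]) (use pq in simp)
  show "walk_cut f p q 0 = f 0" by (simp add: walk_cut_def)
  show "walk_cut f p q (p + (L - q)) = f L"
    unfolding walk_cut_def using walk_append_end[of f p "walk_from f q" "L - q", OF e] pq by simp
  have "weight P f L = weight P f p + weight P (walk_from f p) (L - p)" using weight_split[of p L P f] pq by simp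
  moreover have "weight P (walk_from f p) (L - p) = weight P (walk_from f p) (q - p) + weight P (walk_from f q) (L - q)"
  proof -
    have "walk_from (walk_from f p) (q - p) = walk_from f q" using pq by (auto simp: walk_from_def)
    moreover have "L - p - (q - p) = L - q" using pq by simp
    ultimately show ?thesis using weight_split[of "q - p" "L - p" P "walk_from f p"] pq by simp
  qed
  moreover have "weight P (walk_cut f p q) (p + (L - q)) = weight P f p + weight P (walk_from f q) (L - q)"
    unfolding walk_cut_def using weight_append[of f p "walk_from f q" P "L - q", OF e] .
  ultimately show "weight P f L = weight P (walk_from f p) (q - p) + weight P (walk_cut f p q) (p + (L - q))"
    by simp
qed

lemma walk_append:
  assumes "walk n P f L1" "walk n P h L2" "f L1 = h 0"
  shows "walk n P (walk_append f L1 h) (L1 + L2)"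
    and "walk_append f L1 h 0 = f 0"
    and "walk_append f L1 h (L1 + L2) = h L2"
    and "weight P (walk_append f L1 h) (L1 + L2) = weight P f L1 + weight P h L2"
  using walk_walk_append[OF assms] walk_append_end[of f L1 h L2, OF assms(3)]
    weight_append[of f L1 h P L2, OF assms(3)] by simp_all

section \<open>Matrix entries as optimal walk weights\<close>

lemma mp_mult_ge: "k \<in> {1..n} \<Longrightarrow> U i k + V k j \<le> mp_mult n U V i j"
  unfolding mp_mult_def by (rule SUP_upper2) auto

lemma mp_mult_attained: "n \<ge> 1 \<Longrightarrow> \<exists>k\<in>{1..n}. mp_mult n U V i j = U i k + V k j"
  unfolding mp_mult_def by (rule finite_SUP_attained) auto

lemma mp_mult_not_PInf: "(\<And>k. k\<in>{1..n} \<Longrightarrow> U i k \<noteq> \<infinity> \<and> V k j \<noteq> \<infinity>) \<Longrightarrow> mp_mult n U V i j \<noteq> \<infinity>"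
  unfolding mp_mult_def by (rule finite_SUP_not_PInf) auto

definition no_PInf :: "nat \<Rightarrow> mpmat \<Rightarrow> bool" where
  "no_PInf n P \<longleftrightarrow> (\<forall>a\<in>{1..n}. \<forall>b\<in>{1..n}. P a b \<noteq> \<infinity>)"

definition max_walks :: "nat \<Rightarrow> mpmat \<Rightarrow> mpmat \<Rightarrow> nat \<Rightarrow> bool" where
  "max_walks n Q U L \<longleftrightarrow> (\<forall>a\<in>{1..n}. \<forall>b\<in>{1..n}. U a b \<noteq> \<infinity> \<and>
     (\<forall>f. walk n Q f L \<longrightarrow> f 0 = a \<longrightarrow> f L = b \<longrightarrow> ereal (weight Q f L) \<le> U a b) \<and>
     (\<forall>c. ereal c \<le> U a b \<longrightarrow> (\<exists>f. walk n Q f L \<and> f 0 = a \<and> f L = b \<and> c \<le> weight Q f L)))"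

lemma max_walks_not_PInf: "max_walks n Q U L \<Longrightarrow> a \<in> {1..n} \<Longrightarrow> b \<in> {1..n} \<Longrightarrow> U a b \<noteq> \<infinity>"
  unfolding max_walks_def by blast
lemma max_walks_upper: "max_walks n Q U L \<Longrightarrow> walk n Q f L \<Longrightarrow> ereal (weight Q f L) \<le> U (f 0) (f L)"
  unfolding max_walks_def walk_def by blast
lemma max_walks_witness: "max_walks n Q U L \<Longrightarrow> a \<in> {1..n} \<Longrightarrow> b \<in> {1..n} \<Longrightarrow> ereal c \<le> U a b \<Longrightarrow>
   \<exists>f. walk n Q f L \<and> f 0 = a \<and> f L = b \<and> c \<le> weight Q f L"
  unfolding max_walks_def by blast

lemma max_walks_one: "max_walks n Q mp_one 0"
  unfolding max_walks_def
proof (intro ballI conjI allI impI)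
  fix a b assume ab: "a \<in> {1..n}" "b \<in> {1..n}"
  show "mp_one a b \<noteq> \<infinity>" by (simp add: mp_one_def)
  { fix f assume "walk n Q f 0" "f 0 = a" "f 0 = b"
    thus "ereal (weight Q f 0) \<le> mp_one a b" by (simp add: mp_one_def) }
  { fix c assume "ereal c \<le> mp_one a b"
    hence "a = b" "c \<le> 0" by (auto simp: mp_one_def split: if_splits)
    thus "\<exists>f. walk n Q f 0 \<and> f 0 = a \<and> f 0 = b \<and> c \<le> weight Q f 0"
      using ab by (intro exI[of _ "\<lambda>_. a"]) (simp add: walk_0) }
qed

lemma max_walks_base:
  assumes "no_PInf n Q"
  shows "max_walks n Q Q 1"
  unfolding max_walks_def
proof (intro ballI conjI allI impI)
  fix a b assume ab: "a \<in> {1..n}" "b \<in> {1..n}"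
  show "Q a b \<noteq> \<infinity>" using assms ab unfolding no_PInf_def by blast
  { fix f assume f: "walk n Q f 1" "f 0 = a" "f 1 = b"
    hence "Q a b \<noteq> -\<infinity>" unfolding walk_def by auto
    hence "ereal (real_of_ereal (Q a b)) = Q a b" using \<open>Q a b \<noteq> \<infinity>\<close>
      by (cases "Q a b") auto
    thus "ereal (weight Q f 1) \<le> Q a b" using f by (simp add: weight_def) }
  { fix c assume c: "ereal c \<le> Q a b"
    then obtain r where r: "Q a b = ereal r" "c \<le> r"
      using ereal_ge_real_obtain \<open>Q a b \<noteq> \<infinity>\<close> by blast
    let ?f = "\<lambda>k. if k = 0 then a else b"
    have "walk n Q ?f 1" using ab r unfolding walk_def by (auto simp: le_Suc_eq)
    moreover have "weight Q ?f 1 = r" using r by (simp add: weight_def)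
    ultimately show "\<exists>f. walk n Q f 1 \<and> f 0 = a \<and> f 1 = b \<and> c \<le> weight Q f 1" using r by fastforce }
qed

lemma max_walks_mult:
  assumes U: "max_walks n Q U L1" and V: "max_walks n Q V L2"
  shows "max_walks n Q (mp_mult n U V) (L1 + L2)"
  unfolding max_walks_def
proof (intro ballI conjI allI impI)
  fix a b assume ab: "a \<in> {1..n}" "b \<in> {1..n}"
  show "mp_mult n U V a b \<noteq> \<infinity>"
    by (rule mp_mult_not_PInf) (use ab max_walks_not_PInf[OF U] max_walks_not_PInf[OF V] in blast)
  { fix f assume f: "walk n Q f (L1 + L2)" "f 0 = a" "f (L1 + L2) = b"
    have k: "f L1 \<in> {1..n}" using f unfolding walk_def by auto
    have f1: "walk n Q f L1" using f walk_prefix by auto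
    have f2: "walk n Q (walk_from f L1) L2" using walk_walk_from[OF f(1), of L1] by simp
    have "weight Q f (L1 + L2) = weight Q f L1 + weight Q (walk_from f L1) L2"
      using weight_split[of L1 "L1+L2" Q f] by simp
    hence "ereal (weight Q f (L1 + L2)) = ereal (weight Q f L1) + ereal (weight Q (walk_from f L1) L2)" by simp
    also have "\<dots> \<le> U a (f L1) + V (f L1) b"
      using max_walks_upper[OF U f1] max_walks_upper[OF V f2] f by (intro add_mono) (auto simp: add.commute)
    also have "\<dots> \<le> mp_mult n U V a b" by (rule mp_mult_ge[OF k])
    finally show "ereal (weight Q f (L1 + L2)) \<le> mp_mult n U V a b" . }
  { fix c assume c: "ereal c \<le> mp_mult n U V a b"
    have n1: "n \<ge> 1" using ab by auto
    obtain k where k: "k \<in> {1..n}" "mp_mult n U V a b = U a k + V k b" using mp_mult_attained[OF n1] by blast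
    obtain u v where uv: "U a k = ereal u" "V k b = ereal v" "c \<le> u + v"
      by (rule ereal_add_ge_real_obtain[of "U a k" "V k b" c])
        (use c k max_walks_not_PInf[OF U] max_walks_not_PInf[OF V] ab in auto)
    obtain f1 where f1: "walk n Q f1 L1" "f1 0 = a" "f1 L1 = k" "u \<le> weight Q f1 L1"
      using max_walks_witness[OF U ab(1) k(1), of u] uv by auto
    obtain f2 where f2: "walk n Q f2 L2" "f2 0 = k" "f2 L2 = b" "v \<le> weight Q f2 L2"
      using max_walks_witness[OF V k(1) ab(2), of v] uv by auto
    have e: "f1 L1 = f2 0" using f1 f2 by simp
    show "\<exists>f. walk n Q f (L1 + L2) \<and> f 0 = a \<and> f (L1 + L2) = b \<and> c \<le> weight Q f (L1 + L2)"
      using walk_walk_append[OF f1(1) f2(1) e] weight_append[of f1 L1 f2 Q L2, OF e]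
        walk_append_end[of f1 L1 f2 L2, OF e] f1 f2 uv
      by (intro exI[of _ "walk_append f1 L1 f2"]) auto }
qed

lemma max_walks_pow: "max_walks n Q N d \<Longrightarrow> max_walks n Q (mp_pow n N m) (m * d)"
proof (induction m)
  case 0 thus ?case by (simp add: max_walks_one)
next
  case (Suc m)
  have "max_walks n Q (mp_mult n (mp_pow n N m) N) (m * d + d)"
    by (rule max_walks_mult[OF Suc.IH[OF Suc.prems] Suc.prems])
  thus ?case by (simp add: add.commute)
qed

lemma max_walks_pow_self: "no_PInf n Q \<Longrightarrow> max_walks n Q (mp_pow n Q m) m"
  using max_walks_pow[OF max_walks_base, of n Q m] by simp

lemma walk_arc_finite: "no_PInf n P \<Longrightarrow> walk n P f L \<Longrightarrow> k < L \<Longrightarrow> P (f k) (f (Suc k)) = ereal (real_of_ereal (P (f k) (f (Suc k))))"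
  unfolding walk_def no_PInf_def by (metis Suc_leI less_imp_le_nat ereal_real_finite)

lemma sum_arcs_eq_weight: "no_PInf n P \<Longrightarrow> walk n P f L \<Longrightarrow> (\<Sum>l<L. P (f l) (f (Suc l))) = ereal (weight P f L)"
proof -
  assume a: "no_PInf n P" "walk n P f L"
  have "(\<Sum>l<L. P (f l) (f (Suc l))) = (\<Sum>l<L. ereal (real_of_ereal (P (f l) (f (Suc l)))))"
    by (rule sum.cong) (use walk_arc_finite[OF a] in auto)
  also have "\<dots> = ereal (weight P f L)" by (simp add: weight_def)
  finally show ?thesis .
qed

lemma is_walk_nth_walk: "is_walk n P c \<Longrightarrow> walk n P (\<lambda>k. c ! k) (wlen c) \<and> wlen c \<ge> 1"
  unfolding is_walk_def walk_def wlen_def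
  by (auto simp: subset_iff)

lemma walk_map_upt:
  assumes "walk n P f L" "L \<ge> 1"
  shows "is_walk n P (map f [0..<Suc L])" "wlen (map f [0..<Suc L]) = L"
    "\<And>k. k \<le> L \<Longrightarrow> map f [0..<Suc L] ! k = f k"
proof -
  show "wlen (map f [0..<Suc L]) = L" by (simp add: wlen_def)
  show "\<And>k. k \<le> L \<Longrightarrow> map f [0..<Suc L] ! k = f k"
    by (simp add: nth_map_upt less_Suc_eq_le del: upt_Suc)
  show "is_walk n P (map f [0..<Suc L])"
    using assms unfolding is_walk_def walk_def
    by (auto simp: nth_map_upt less_Suc_eq_le simp del: upt_Suc)
qed

lemma wweight_list: "no_PInf n P \<Longrightarrow> is_walk n P c \<Longrightarrow> wweight P c = ereal (weight P (\<lambda>k. c ! k) (wlen c))"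
  unfolding wweight_def using sum_arcs_eq_weight is_walk_nth_walk by blast

lemma cmean_list: "no_PInf n P \<Longrightarrow> is_walk n P c \<Longrightarrow>
   cmean P c = ereal (weight P (\<lambda>k. c ! k) (wlen c) / real (wlen c))"
  unfolding cmean_def using wweight_list[of n P c] is_walk_nth_walk[of n P c] by auto

lemma wweight_map: "no_PInf n P \<Longrightarrow> walk n P f L \<Longrightarrow> L \<ge> 1 \<Longrightarrow> wweight P (map f [0..<Suc L]) = ereal (weight P f L)"
proof -
  assume a: "no_PInf n P" "walk n P f L" "L \<ge> 1"
  have "wweight P (map f [0..<Suc L]) = ereal (weight P (\<lambda>k. map f [0..<Suc L] ! k) L)"
    using wweight_list[OF a(1) walk_map_upt(1)[OF a(2,3)]] walk_map_upt(2)[OF a(2,3)] by simp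
  also have "weight P (\<lambda>k. map f [0..<Suc L] ! k) L = weight P f L"
    by (rule weight_cong) (use walk_map_upt(3)[OF a(2,3)] in auto)
  finally show ?thesis .
qed

lemma cmean_map: "no_PInf n P \<Longrightarrow> walk n P f L \<Longrightarrow> L \<ge> 1 \<Longrightarrow> cmean P (map f [0..<Suc L]) = ereal (weight P f L / L)"
  unfolding cmean_def using wweight_map[of n P f L] walk_map_upt(2)[of n P f L] by auto

lemma walk_A_lam: "mcm n P = ereal \<mu> \<Longrightarrow> walk n (A_lam n P) f L = walk n P f L"
  unfolding walk_def A_lam_def by (auto simp: ereal_minus_MInf)

lemma no_PInf_A_lam: "mcm n P = ereal \<mu> \<Longrightarrow> no_PInf n P \<Longrightarrow> no_PInf n (A_lam n P)"
  unfolding no_PInf_def A_lam_def by (auto simp: ereal_minus_PInf)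

lemma weight_A_lam:
  assumes "mcm n P = ereal \<mu>" "no_PInf n P" "walk n P f L"
  shows "weight (A_lam n P) f L = weight P f L - \<mu> * L"
proof -
  have "weight (A_lam n P) f L = (\<Sum>k<L. real_of_ereal (P (f k) (f (Suc k))) - \<mu>)"
    unfolding weight_def
  proof (rule sum.cong)
    fix k assume "k \<in> {..<L}"
    hence "P (f k) (f (Suc k)) = ereal (real_of_ereal (P (f k) (f (Suc k))))" using walk_arc_finite[OF assms(2,3)] by auto
    thus "real_of_ereal (A_lam n P (f k) (f (Suc k))) = real_of_ereal (P (f k) (f (Suc k))) - \<mu>"
      unfolding A_lam_def assms(1) by (cases "P (f k) (f (Suc k))") auto
  qed simp
  also have "\<dots> = weight P f L - \<mu> * L" by (simp add: weight_def sum_subtractf)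
  finally show ?thesis .
qed

lemma max_walks_N_pow:
  assumes "mcm n P = ereal \<mu>" "no_PInf n P"
  shows "max_walks n (A_lam n P) (mp_pow n (mp_pow n (A_lam n P) (cyclicity_crit n P)) m) (m * cyclicity_crit n P)"
  using max_walks_pow[OF max_walks_pow_self[OF no_PInf_A_lam[OF assms]]] by simp

lemma M_mat_not_PInf:
  assumes "mcm n P = ereal \<mu>" "no_PInf n P" "a \<in> {1..n}" "b \<in> {1..n}"
  shows "M_mat n P a b \<noteq> \<infinity>"
  unfolding M_mat_def by (rule finite_SUP_not_PInf) (use max_walks_not_PInf[OF max_walks_N_pow[OF assms(1,2)]] assms in auto)

lemma M_mat_ge_weight:
  assumes "mcm n P = ereal \<mu>" "no_PInf n P" "m < n" "walk n P f (m * cyclicity_crit n P)"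
  shows "ereal (weight P f (m * cyclicity_crit n P) - \<mu> * (m * cyclicity_crit n P)) \<le>
     M_mat n P (f 0) (f (m * cyclicity_crit n P))"
proof -
  have "ereal (weight (A_lam n P) f (m * cyclicity_crit n P)) \<le>
     mp_pow n (mp_pow n (A_lam n P) (cyclicity_crit n P)) m (f 0) (f (m * cyclicity_crit n P))"
    by (rule max_walks_upper[OF max_walks_N_pow[OF assms(1,2)]]) (use assms(4) walk_A_lam[OF assms(1)] in simp)
  also have "\<dots> \<le> M_mat n P (f 0) (f (m * cyclicity_crit n P))"
    unfolding M_mat_def by (rule SUP_upper) (use assms in auto)
  finally show ?thesis using weight_A_lam[OF assms(1,2,4)] by simp
qed

lemma M_mat_witness:
  assumes "mcm n P = ereal \<mu>" "no_PInf n P" "a \<in> {1..n}" "b \<in> {1..n}" "ereal c \<le> M_mat n P a b"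
  shows "\<exists>m<n. \<exists>f. walk n P f (m * cyclicity_crit n P) \<and> f 0 = a \<and> f (m * cyclicity_crit n P) = b \<and>
     c \<le> weight P f (m * cyclicity_crit n P) - \<mu> * (m * cyclicity_crit n P)"
proof -
  have "n \<ge> 1" using assms by auto
  hence ne: "{..<n} \<noteq> {}" by (metis lessThan_empty_iff not_one_le_zero)
  obtain m where m: "m < n" "M_mat n P a b = mp_pow n (mp_pow n (A_lam n P) (cyclicity_crit n P)) m a b"
    unfolding M_mat_def using finite_SUP_attained[of "{..<n}" "\<lambda>m. mp_pow n (mp_pow n (A_lam n P) (cyclicity_crit n P)) m a b", OF _ ne] by auto
  then obtain f where f: "walk n (A_lam n P) f (m * cyclicity_crit n P)" "f 0 = a" "f (m * cyclicity_crit n P) = b"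
     "c \<le> weight (A_lam n P) f (m * cyclicity_crit n P)"
    using max_walks_witness[OF max_walks_N_pow[OF assms(1,2)] assms(3,4), of c] assms(5) by auto
  have "walk n P f (m * cyclicity_crit n P)" using f(1) walk_A_lam[OF assms(1)] by simp
  thus ?thesis using m f weight_A_lam[OF assms(1,2)] by auto
qed

definition submat :: "mpmat \<Rightarrow> mpmat \<Rightarrow> bool" where
  "submat Q P \<longleftrightarrow> (\<forall>a b. Q a b \<noteq> -\<infinity> \<longrightarrow> Q a b = P a b)"

lemma submat_walk: "submat Q P \<Longrightarrow> walk n Q f L \<Longrightarrow> walk n P f L"
  unfolding submat_def walk_def by metis

lemma submat_weight: "submat Q P \<Longrightarrow> walk n Q f L \<Longrightarrow> weight Q f L = weight P f L"
  unfolding submat_def walk_def weight_def by (intro sum.cong) auto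

lemma submat_no_PInf: "submat Q P \<Longrightarrow> no_PInf n P \<Longrightarrow> no_PInf n Q"
  unfolding submat_def no_PInf_def by (metis MInfty_neq_PInfty(1))

lemma submat_refl: "submat P P" unfolding submat_def by simp

lemma submat_cycle:
  assumes "submat Q P" "is_cycle n Q c"
  shows "is_cycle n P c" "cmean Q c = cmean P c"
proof -
  show "is_cycle n P c" using assms unfolding is_cycle_def is_walk_def submat_def by metis
  have "wweight Q c = wweight P c" unfolding wweight_def
    by (rule sum.cong) (use assms in \<open>auto simp: is_cycle_def is_walk_def submat_def wlen_def\<close>)
  thus "cmean Q c = cmean P c" unfolding cmean_def by simp
qed

lemma is_cycle_props:
  assumes "is_cycle n P c"
  shows "is_walk n P c" "wlen c \<ge> 1" "length c = Suc (wlen c)" "c ! wlen c = c ! 0"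
    "distinct (butlast c)"
proof -
  show w: "is_walk n P c" using assms unfolding is_cycle_def by auto
  show "wlen c \<ge> 1" using is_walk_nth_walk[OF w] by auto
  show ll: "length c = Suc (wlen c)" using w unfolding is_walk_def wlen_def by auto
  have "hd c = last c" using assms unfolding is_cycle_def by auto
  moreover have "c \<noteq> []" using ll by auto
  ultimately show "c ! wlen c = c ! 0" using ll by (simp add: hd_conv_nth last_conv_nth)
  show "distinct (butlast c)" using assms unfolding is_cycle_def by auto
qed

lemma crit_cycle_rotation:
  fixes s :: nat
  assumes c: "is_crit_cycle n P c"
  defines "p \<equiv> \<lambda>k. c ! ((s + k) mod wlen c)"
  shows "inj_on p {0..<wlen c}" "\<And>k. crit_arc n P (p k) (p (Suc k))" "\<And>k. p k \<in> {1..n}"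
    "weight P p (wlen c) = weight P (\<lambda>k. c ! k) (wlen c)"
proof -
  define m where "m = wlen c"
  note cb = is_cycle_props[OF c[unfolded is_crit_cycle_def, THEN conjunct1], folded m_def]
  have lt: "(s + k) mod m < m" for k using cb(2) by simp
  have pk: "p k = c ! ((s + k) mod m)" for k unfolding p_def m_def by simp
  have pS: "p (Suc k) = c ! Suc ((s + k) mod m)" for k
    unfolding pk using cb(4) lt[of k] by (auto simp: mod_Suc)
  show "crit_arc n P (p k) (p (Suc k))" for k
    unfolding crit_arc_def
    by (rule exI[of _ c], rule conjI[OF c], rule exI[of _ "(s + k) mod m"]) (use pk pS lt m_def in auto)
  show "p k \<in> {1..n}" for k
    using cb(1,3) lt[of k] unfolding pk is_walk_def by (auto simp: subset_iff)
  show "inj_on p {0..<wlen c}"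
  proof (rule inj_onI)
    fix k k' assume kk: "k \<in> {0..<wlen c}" "k' \<in> {0..<wlen c}" "p k = p k'"
    have "butlast c ! ((s + k) mod m) = butlast c ! ((s + k') mod m)"
      using kk(3) pk lt cb(3) by (simp add: nth_butlast)
    moreover have "length (butlast c) = m" using cb(3) by simp
    ultimately have "(s + k) mod m = (s + k') mod m"
      using cb(5) lt nth_eq_iff_index_eq by metis
    thus "k = k'" by (rule mod_add_inj[of k m k' s, rotated 2]) (use kk m_def in auto)
  qed
  have "weight P p m = (\<Sum>k<m. (\<lambda>i. real_of_ereal (P (c ! i) (c ! Suc i))) ((s + k) mod m))"
    unfolding weight_def using pk pS by simp
  also have "\<dots> = weight P (\<lambda>k. c ! k) m" unfolding weight_def by (rule sum_rotate) (use cb(2) in simp)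
  finally show "weight P p (wlen c) = weight P (\<lambda>k. c ! k) (wlen c)" using m_def by simp
qed

lemma crit_cycle_nodes: "is_crit_cycle n P c \<Longrightarrow> set c \<subseteq> {1..n}"
  unfolding is_crit_cycle_def is_cycle_def is_walk_def by auto

lemma crit_arc_props:
  assumes "crit_arc n P x y"
  shows "x \<in> {1..n}" "y \<in> {1..n}" "P x y \<noteq> -\<infinity>"
proof -
  obtain c l where c: "is_crit_cycle n P c" "l < wlen c" "c ! l = x" "c ! Suc l = y"
    using assms unfolding crit_arc_def by blast
  have w: "is_walk n P c" using c(1) unfolding is_crit_cycle_def is_cycle_def by auto
  have "Suc l < length c" using c(2) unfolding wlen_def by auto
  thus "x \<in> {1..n}" "y \<in> {1..n}" using w c unfolding is_walk_def by (auto simp: subset_iff)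
  show "P x y \<noteq> -\<infinity>" using w c unfolding is_walk_def wlen_def by auto
qed

lemma crit_arc_nodes: "crit_arc n P x y \<Longrightarrow> crit_node n P x \<and> crit_node n P y"
proof -
  assume "crit_arc n P x y"
  then obtain c l where c: "is_crit_cycle n P c" "l < wlen c" "c ! l = x" "c ! Suc l = y"
    unfolding crit_arc_def by blast
  have "Suc l < length c" using c(2) unfolding wlen_def by simp
  hence "x \<in> set c" "y \<in> set c" using c(3,4) nth_mem[of l c] nth_mem[of "Suc l" c] by auto
  thus ?thesis unfolding crit_node_def using c(1) by blast
qed

lemma weight_le_length_Max:
  assumes "no_PInf n P" "walk n P f L"
  shows "weight P f L \<le> L * Max {real_of_ereal (P a b) | a b. a \<in> {1..n} \<and> b \<in> {1..n}}"
proof -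
  let ?S = "{real_of_ereal (P a b) | a b. a \<in> {1..n} \<and> b \<in> {1..n}}"
  have fS: "finite ?S"
    by (rule finite_image_set2) auto
  have "weight P f L \<le> (\<Sum>k<L. Max ?S)" unfolding weight_def
  proof (rule sum_mono)
    fix k assume "k \<in> {..<L}"
    hence "f k \<in> {1..n}" "f (Suc k) \<in> {1..n}" using assms(2) unfolding walk_def by auto
    thus "real_of_ereal (P (f k) (f (Suc k))) \<le> Max ?S" using fS by (intro Max_ge) auto
  qed
  thus ?thesis by simp
qed

lemma mcm_not_PInf:
  assumes A: "no_PInf n A"
  shows "mcm n A \<noteq> \<infinity>"
proof -
  let ?M = "Max {real_of_ereal (A a b) | a b. a \<in> {1..n} \<and> b \<in> {1..n}}"
  have "mcm n A \<le> ereal ?M" unfolding mcm_def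
  proof (rule Sup_least)
    fix x assume "x \<in> {cmean A c |c. is_cycle n A c}"
    then obtain c where c: "x = cmean A c" "is_cycle n A c" by auto
    have w: "is_walk n A c" using c unfolding is_cycle_def by auto
    have l: "wlen c \<ge> 1" "walk n A (\<lambda>k. c ! k) (wlen c)" using is_walk_nth_walk[OF w] by auto
    have "weight A (\<lambda>k. c ! k) (wlen c) \<le> wlen c * ?M" by (rule weight_le_length_Max[OF A l(2)])
    hence "weight A (\<lambda>k. c ! k) (wlen c) / wlen c \<le> ?M" using l(1)
      by (simp add: divide_le_eq mult.commute)
    thus "x \<le> ereal ?M" using c cmean_list[OF A w] by simp
  qed
  thus ?thesis by auto
qed

lemma crit_cycle_submat:
  assumes "submat P Q" "mcm n P = mcm n Q" "is_crit_cycle n P c"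
  shows "is_crit_cycle n Q c"
  using assms submat_cycle[OF assms(1)] unfolding is_crit_cycle_def by auto

lemma crit_arc_submat: "submat P Q \<Longrightarrow> mcm n P = mcm n Q \<Longrightarrow> crit_arc n P x y \<Longrightarrow> crit_arc n Q x y"
  unfolding crit_arc_def using crit_cycle_submat by blast

lemma crit_node_submat: "submat P Q \<Longrightarrow> mcm n P = mcm n Q \<Longrightarrow> crit_node n P x \<Longrightarrow> crit_node n Q x"
  unfolding crit_node_def using crit_cycle_submat by blast

text \<open>\<open>up_cycle m k\<close> is the node reached from \<open>1\<close> after \<open>k\<close> steps along the cycle \<open>(1, 2, \<dots>, m, 1)\<close>.\<close>

definition up_cycle :: "nat \<Rightarrow> nat \<Rightarrow> nat" where
  "up_cycle m k = k mod m + 1"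

definition up_cycle_list :: "nat \<Rightarrow> nat list" where
  "up_cycle_list m = map (up_cycle m) [0..<Suc m]"

lemma up_cycle_less: "k < m \<Longrightarrow> up_cycle m k = k + 1"
  unfolding up_cycle_def by simp

lemma up_cycle_self: "up_cycle m m = 1"
  unfolding up_cycle_def by simp

lemma up_cycle_range: "0 < m \<Longrightarrow> up_cycle m k \<in> {1..m}"
  unfolding up_cycle_def by (simp add: Suc_le_eq)

lemma up_cycle_Suc: "0 < m \<Longrightarrow> up_cycle m (Suc k) = (if up_cycle m k < m then up_cycle m k + 1 else 1)"
proof -
  assume "0 < m"
  hence "k mod m < m" by simp
  thus ?thesis unfolding up_cycle_def by (auto simp: mod_Suc)
qed

lemma up_cycle_mod: "up_cycle m (k mod m) = up_cycle m k"
  unfolding up_cycle_def by simp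

lemma up_cycle_list_nth: "k \<le> m \<Longrightarrow> up_cycle_list m ! k = up_cycle m k"
  unfolding up_cycle_list_def by (simp add: nth_map_upt less_Suc_eq_le del: upt_Suc)

lemma wlen_up_cycle_list: "wlen (up_cycle_list m) = m"
  unfolding up_cycle_list_def wlen_def by simp

lemma up_cycle_list_cycle:
  assumes m: "0 < m" and w: "walk n P (up_cycle m) m"
  shows "is_cycle n P (up_cycle_list m)"
proof -
  have "is_walk n P (up_cycle_list m)" unfolding up_cycle_list_def using walk_map_upt[OF w] m by simp
  moreover have "hd (up_cycle_list m) = up_cycle m 0" unfolding up_cycle_list_def by (simp add: hd_map del: upt_Suc)
  moreover have "last (up_cycle_list m) = up_cycle m m" unfolding up_cycle_list_def by simp
  moreover have "butlast (up_cycle_list m) = map (up_cycle m) [0..<m]" unfolding up_cycle_list_def by simp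
  moreover have "inj_on (up_cycle m) {0..<m}" using up_cycle_less by (intro inj_onI) auto
  ultimately show ?thesis unfolding is_cycle_def using m by (simp add: distinct_map up_cycle_self up_cycle_def)
qed

lemma cmean_up_cycle_list:
  "no_PInf n P \<Longrightarrow> 0 < m \<Longrightarrow> walk n P (up_cycle m) m \<Longrightarrow>
   cmean P (up_cycle_list m) = ereal (weight P (up_cycle m) m / m)"
  unfolding up_cycle_list_def by (rule cmean_map) simp_all

lemma crit_arc_up_cycle:
  assumes "is_crit_cycle n P (up_cycle_list m)" "0 < m"
  shows "crit_arc n P (up_cycle m k) (up_cycle m (Suc k))"
proof -
  have "k mod m < wlen (up_cycle_list m)" using assms(2) wlen_up_cycle_list by simp
  moreover have "up_cycle_list m ! (k mod m) = up_cycle m k"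
    using up_cycle_list_nth[of "k mod m" m] up_cycle_mod assms(2) by simp
  moreover have "up_cycle_list m ! Suc (k mod m) = up_cycle m (Suc k)"
    using up_cycle_list_nth[of "Suc (k mod m)" m] assms(2)
    by (simp add: Suc_leI up_cycle_def mod_Suc_eq)
  ultimately show ?thesis unfolding crit_arc_def using assms(1) by blast
qed

lemma up_cycle_reach:
  assumes m: "0 < m" and steps: "\<And>k. (up_cycle m k, up_cycle m (Suc k)) \<in> R"
    and ab: "a \<in> {1..m}" "b \<in> {1..m}"
  shows "(a, b) \<in> R\<^sup>*"
proof -
  have reach: "(up_cycle m k, up_cycle m (k + j)) \<in> R\<^sup>*" for k j
  proof (induction j)
    case (Suc j) thus ?case using steps[of "k + j"] by simp
  qed simp
  have "up_cycle m (a - 1) = a" "up_cycle m (b - 1) = b" using up_cycle_less ab by auto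
  moreover have "up_cycle m (a - 1 + (m - (a - 1))) = up_cycle m 0" using ab by (simp add: up_cycle_def)
  ultimately show ?thesis using reach[of "a - 1" "m - (a - 1)"] reach[of 0 "b - 1"] by simp
qed

lemma up_cycle_len_in_comp:
  assumes "is_crit_cycle n P (up_cycle_list m)" "0 < m" "{1..m} \<subseteq> C"
  shows "m \<in> comp_cycle_lens n P C"
proof -
  have "is_cycle n P (up_cycle_list m)" using assms(1) unfolding is_crit_cycle_def by blast
  moreover have "set (up_cycle_list m) \<subseteq> C" unfolding up_cycle_list_def using up_cycle_range assms(2,3) by auto
  moreover have "\<forall>l<wlen (up_cycle_list m). crit_arc n P (up_cycle_list m ! l) (up_cycle_list m ! Suc l)"
    using up_cycle_list_nth crit_arc_up_cycle[OF assms(1,2)] wlen_up_cycle_list by simp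
  ultimately have "m = wlen (up_cycle_list m) \<and> is_cycle n P (up_cycle_list m) \<and> set (up_cycle_list m) \<subseteq> C \<and>
      (\<forall>l<wlen (up_cycle_list m). crit_arc n P (up_cycle_list m ! l) (up_cycle_list m ! Suc l))"
    using wlen_up_cycle_list by simp
  thus ?thesis unfolding comp_cycle_lens_def by blast
qed

lemma up_cycle_up_cycle: "up_cycle m (up_cycle m k) = up_cycle m (Suc k)"
  unfolding up_cycle_def by (simp add: mod_Suc_eq)

lemma up_cycle_Suc_mod: "up_cycle m (Suc (k mod m)) = up_cycle m (Suc k)"
  unfolding up_cycle_def by (simp add: mod_Suc_eq)

lemma cyclicity_crit_eq:
  assumes "crit_comps n P \<noteq> {}" "\<And>C. C \<in> crit_comps n P \<Longrightarrow> Gcd (comp_cycle_lens n P C) = d"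
  shows "cyclicity_crit n P = d"
proof -
  have "(\<lambda>C. Gcd (comp_cycle_lens n P C)) ` crit_comps n P = {d}" using assms by auto
  thus ?thesis unfolding cyclicity_crit_def by simp
qed

definition no_jump :: "(nat \<Rightarrow> nat) \<Rightarrow> nat \<Rightarrow> bool" where
  "no_jump f L \<longleftrightarrow> (\<forall>k<L. f (Suc k) \<le> f k + 1)"

lemma no_jump_prefix: "no_jump f L \<Longrightarrow> L' \<le> L \<Longrightarrow> no_jump f L'"
  unfolding no_jump_def by auto

lemma no_jump_walk_from: "no_jump f L \<Longrightarrow> p \<le> L \<Longrightarrow> no_jump (walk_from f p) (L - p)"
  unfolding no_jump_def by auto

lemma no_jump_append:
  assumes "no_jump f L1" "no_jump h L2" "f L1 = h 0"
  shows "no_jump (walk_append f L1 h) (L1 + L2)"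
  unfolding no_jump_def
proof (intro allI impI)
  fix k assume k: "k < L1 + L2"
  show "walk_append f L1 h (Suc k) \<le> walk_append f L1 h k + 1"
  proof (cases "k < L1")
    case True thus ?thesis using assms(1) unfolding no_jump_def walk_append_def by simp
  next
    case False
    hence "k - L1 < L2" "Suc k - L1 = Suc (k - L1)" using k by auto
    moreover have "walk_append f L1 h k = h (k - L1)" using False assms(3) by (auto simp: walk_append_def)
    ultimately show ?thesis using assms(2) False unfolding no_jump_def walk_append_def by simp
  qed
qed

lemma no_jump_cut:
  "no_jump f L \<Longrightarrow> p \<le> q \<Longrightarrow> q \<le> L \<Longrightarrow> f p = f q \<Longrightarrow> no_jump (walk_cut f p q) (p + (L - q))"
  unfolding walk_cut_def by (rule no_jump_append) (auto intro: no_jump_prefix no_jump_walk_from)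

lemma no_jump_ivt:
  assumes "no_jump f L" "p \<le> q" "q \<le> L" "f p \<le> v" "v \<le> f q"
  shows "\<exists>k. p \<le> k \<and> k \<le> q \<and> f k = v"
  using assms(2-5)
proof (induction q)
  case 0 thus ?case by auto
next
  case (Suc q)
  show ?case
  proof (cases "p = Suc q")
    case True thus ?thesis using Suc.prems by auto
  next
    case False
    show ?thesis
    proof (cases "v \<le> f q")
      case True
      then obtain k where "p \<le> k" "k \<le> q" "f k = v" using Suc False by auto
      thus ?thesis by (intro exI[of _ k]) simp
    next
      case v: False
      have "f (Suc q) \<le> f q + 1" using assms(1) Suc.prems(2) unfolding no_jump_def by simp
      hence "f (Suc q) = v" using v Suc.prems(4) by simp
      thus ?thesis using Suc.prems(1) by blast
    qed
  qed
qed

lemma crossing_step: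
  "f 0 > (g::nat) \<Longrightarrow> f L \<le> g \<Longrightarrow> \<exists>r<L. f r > g \<and> f (Suc r) \<le> g"
proof (induction L)
  case (Suc L)
  show ?case
  proof (cases "f L \<le> g")
    case True thus ?thesis using Suc by (meson less_Suc_eq)
  next
    case False thus ?thesis using Suc.prems by auto
  qed
qed simp

lemma submat_S: "submat (S_mat n P) P" unfolding submat_def S_mat_def by auto

lemma max_walks_S_pow: "no_PInf n P \<Longrightarrow> max_walks n (S_mat n P) (mp_pow n (S_mat n P) t) t"
  by (rule max_walks_pow_self[OF submat_no_PInf[OF submat_S]])

lemma CSR_eq:
  assumes "mcm n P = ereal \<mu>"
  shows "CSR n P t = mp_mult n (mp_mult n (C_mat n P) (mp_pow n (S_mat n P) t)) (R_mat n P)"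
  unfolding CSR_def using assms by simp

lemma C_mat_not_PInf:
  "mcm n P = ereal \<mu> \<Longrightarrow> no_PInf n P \<Longrightarrow> a \<in> {1..n} \<Longrightarrow> b \<in> {1..n} \<Longrightarrow> C_mat n P a b \<noteq> \<infinity>"
  unfolding C_mat_def using M_mat_not_PInf[of n P \<mu> a b] by auto

lemma R_mat_not_PInf:
  "mcm n P = ereal \<mu> \<Longrightarrow> no_PInf n P \<Longrightarrow> a \<in> {1..n} \<Longrightarrow> b \<in> {1..n} \<Longrightarrow> R_mat n P a b \<noteq> \<infinity>"
  unfolding R_mat_def using M_mat_not_PInf[of n P \<mu> a b] by auto

lemma C_S_pow_not_PInf:
  assumes P: "mcm n P = ereal \<mu>" "no_PInf n P" and ab: "a \<in> {1..n}" "b \<in> {1..n}"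
  shows "mp_mult n (C_mat n P) (mp_pow n (S_mat n P) t) a b \<noteq> \<infinity>"
  by (rule mp_mult_not_PInf) (use C_mat_not_PInf[OF P] max_walks_not_PInf[OF max_walks_S_pow[OF P(2)]] ab in auto)

lemma CSR_not_PInf:
  assumes P: "mcm n P = ereal \<mu>" "no_PInf n P" and ab: "a \<in> {1..n}" "b \<in> {1..n}"
  shows "CSR n P t a b \<noteq> \<infinity>"
  unfolding CSR_eq[OF P(1)]
  by (rule mp_mult_not_PInf) (use C_S_pow_not_PInf[OF P] R_mat_not_PInf[OF P] ab in auto)

lemma C_S_pow_witness:
  assumes P: "mcm n P = ereal \<mu>" "no_PInf n P" and ab: "a \<in> {1..n}" "b \<in> {1..n}"
    and c: "ereal c \<le> mp_mult n (C_mat n P) (mp_pow n (S_mat n P) t) a b"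
  shows "\<exists>L f. walk n P f L \<and> f 0 = a \<and> f L = b \<and> c \<le> weight P f L - \<mu> * L + \<mu> * t"
proof -
  let ?G = "cyclicity_crit n P"
  obtain k where k: "k \<in> {1..n}"
    "mp_mult n (C_mat n P) (mp_pow n (S_mat n P) t) a b = C_mat n P a k + mp_pow n (S_mat n P) t k b"
    using mp_mult_attained[of n] ab by fastforce
  obtain c1 s where cs: "C_mat n P a k = ereal c1" "mp_pow n (S_mat n P) t k b = ereal s" "c \<le> c1 + s"
    by (rule ereal_add_ge_real_obtain)
       (use C_mat_not_PInf[OF P ab(1) k(1)] max_walks_not_PInf[OF max_walks_S_pow[OF P(2)] k(1) ab(2)] c k in auto)
  have "M_mat n P a k = ereal c1" using cs(1) unfolding C_mat_def by (auto split: if_splits)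
  then obtain m f1 where f1: "walk n P f1 (m * ?G)" "f1 0 = a" "f1 (m * ?G) = k"
      "c1 \<le> weight P f1 (m * ?G) - \<mu> * (m * ?G)"
    using M_mat_witness[OF P ab(1) k(1), of c1] by auto
  obtain f2 where f2: "walk n (S_mat n P) f2 t" "f2 0 = k" "f2 t = b" "s \<le> weight (S_mat n P) f2 t"
    using max_walks_witness[OF max_walks_S_pow[of n P t, OF P(2)] k(1) ab(2), of s] cs by auto
  have f2P: "walk n P f2 t" "weight (S_mat n P) f2 t = weight P f2 t"
    using submat_walk[OF submat_S f2(1)] submat_weight[OF submat_S f2(1)] by auto
  note app = walk_append[OF f1(1) f2P(1), unfolded f1(3) f2(2), OF refl]
  have "c \<le> weight P (walk_append f1 (m * ?G) f2) (m * ?G + t) - \<mu> * (m * ?G + t) + \<mu> * t"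
    using app(4) cs(3) f1(4) f2(4) f2P(2) by (simp add: algebra_simps)
  thus ?thesis using app(1,2,3) f1(2) f2(3) by blast
qed

lemma CSR_witness:
  assumes P: "mcm n P = ereal \<mu>" "no_PInf n P" and ab: "a \<in> {1..n}" "b \<in> {1..n}"
    and c: "ereal c \<le> CSR n P t a b"
  shows "\<exists>L f. walk n P f L \<and> f 0 = a \<and> f L = b \<and> c \<le> weight P f L - \<mu> * L + \<mu> * t"
proof -
  obtain l where l: "l \<in> {1..n}"
    "CSR n P t a b = mp_mult n (C_mat n P) (mp_pow n (S_mat n P) t) a l + R_mat n P l b"
    using mp_mult_attained[of n] CSR_eq[OF P(1)] ab by fastforce
  obtain u r where ur: "mp_mult n (C_mat n P) (mp_pow n (S_mat n P) t) a l = ereal u"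
      "R_mat n P l b = ereal r" "c \<le> u + r"
    by (rule ereal_add_ge_real_obtain)
       (use C_S_pow_not_PInf[OF P ab(1) l(1)] R_mat_not_PInf[OF P l(1) ab(2)] c l in auto)
  obtain L1 f1 where f1: "walk n P f1 L1" "f1 0 = a" "f1 L1 = l" "u \<le> weight P f1 L1 - \<mu> * L1 + \<mu> * t"
    using C_S_pow_witness[OF P ab(1) l(1), of u t] ur(1) by auto
  have "M_mat n P l b = ereal r" using ur(2) unfolding R_mat_def by (auto split: if_splits)
  then obtain m f3 where f3: "walk n P f3 (m * cyclicity_crit n P)" "f3 0 = l" "f3 (m * cyclicity_crit n P) = b"
      "r \<le> weight P f3 (m * cyclicity_crit n P) - \<mu> * (m * cyclicity_crit n P)"
    using M_mat_witness[OF P l(1) ab(2), of r] by auto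
  note app = walk_append[OF f1(1) f3(1), unfolded f1(3) f3(2), OF refl]
  have "c \<le> weight P (walk_append f1 L1 f3) (L1 + m * cyclicity_crit n P)
           - \<mu> * (L1 + m * cyclicity_crit n P) + \<mu> * t"
    using app(4) ur(3) f1(4) f3(4) by (simp add: algebra_simps)
  thus ?thesis using app(1,2,3) f1(2) f3(3) by blast
qed

locale mp_finite_lambda =
  fixes n :: nat and A :: mpmat
  assumes entries: "\<forall>i\<in>{1..n}. \<forall>j\<in>{1..n}. A i j \<noteq> \<infinity>"
    and lambda_finite: "mcm n A \<noteq> -\<infinity>"
begin

lemma no_PInf_A: "no_PInf n A" using entries unfolding no_PInf_def by blast

definition lam :: real where "lam = real_of_ereal (mcm n A)"

lemma mcm_eq_lam: "mcm n A = ereal lam"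
  unfolding lam_def using mcm_not_PInf[OF no_PInf_A] lambda_finite by (cases "mcm n A") auto

lemma cycle_weight_le:
  assumes "is_cycle n A c"
  shows "weight A (\<lambda>k. c ! k) (wlen c) \<le> lam * wlen c"
proof -
  have w: "is_walk n A c" using assms unfolding is_cycle_def by auto
  have l: "wlen c \<ge> 1" using is_walk_nth_walk[OF w] by auto
  have "cmean A c \<le> mcm n A" unfolding mcm_def by (rule Sup_upper) (use assms in auto)
  hence "weight A (\<lambda>k. c ! k) (wlen c) / wlen c \<le> lam" using cmean_list[OF no_PInf_A w] mcm_eq_lam by simp
  thus ?thesis using l by (simp add: divide_le_eq mult.commute)
qed

lemma elementary_closed_walk_weight_le:
  assumes f: "walk n A f L" "f 0 = f L" and L: "L \<ge> 1" and inj: "inj_on f {0..<L}"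
  shows "weight A f L \<le> lam * L"
proof -
  let ?c = "map f [0..<Suc L]"
  have w: "is_walk n A ?c" and wl: "wlen ?c = L" using walk_map_upt[OF f(1) L] by auto
  have "butlast ?c = map f [0..<L]" by simp
  hence d: "distinct (butlast ?c)" using inj by (simp add: distinct_map)
  have "hd ?c = f 0" by (simp add: hd_map del: upt_Suc)
  moreover have "last ?c = f L" by simp
  ultimately have cy: "is_cycle n A ?c" using w d f(2) unfolding is_cycle_def by simp
  have "weight A (\<lambda>k. ?c ! k) (wlen ?c) = weight A f L"
    unfolding wl by (rule weight_cong) (use walk_map_upt(3)[OF f(1) L] in auto)
  thus ?thesis using cycle_weight_le[OF cy] wl by simp
qed

text \<open>A closed walk splits at a repeated node into two shorter closed walks.\<close>

lemma closed_walk_weight_le: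
  "walk n A f L \<Longrightarrow> f 0 = f L \<Longrightarrow> weight A f L \<le> lam * L"
proof (induction L arbitrary: f rule: less_induct)
  case (less L)
  show ?case
  proof (cases "L \<ge> 1 \<and> inj_on f {0..<L}")
    case True thus ?thesis using elementary_closed_walk_weight_le less.prems by blast
  next
    case False
    show ?thesis
    proof (cases "L = 0")
      case True thus ?thesis by simp
    next
      case L0: False
      then obtain p q where pq: "p < q" "q < L" "f p = f q" using False
        unfolding inj_on_def by (metis atLeastLessThan_iff linorder_neqE_nat less_one not_less)
      note cut = walk_cut[OF less.prems(1) less_imp_le[OF pq(1)] less_imp_le[OF pq(2)] pq(3)]
      have "weight A (walk_from f p) (q - p) \<le> lam * (q - p)"
        by (rule less.IH[OF _ cut(1)]) (use pq in auto)
      moreover have "weight A (walk_cut f p q) (p + (L - q)) \<le> lam * (p + (L - q))"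
        by (rule less.IH[OF _ cut(2)]) (use cut(3,4) less.prems(2) pq in auto)
      ultimately show ?thesis using cut(5) pq by (simp add: algebra_simps of_nat_diff)
    qed
  qed
qed

lemma closed_walk_pair_weight_le:
  assumes "walk n A f L1" "walk n A h L2" "f L1 = h 0" "h L2 = f 0"
  shows "weight A f L1 + weight A h L2 \<le> lam * (L1 + L2)"
proof -
  have "weight A (walk_append f L1 h) (L1 + L2) \<le> lam * (L1 + L2)"
    using closed_walk_weight_le[OF walk_walk_append[OF assms(1-3)]] walk_append_end[of f L1 h L2] assms(3,4) by simp
  thus ?thesis using weight_append[of f L1 h A L2] assms(3) by simp
qed

lemma weight_crit_cycle:
  assumes "is_crit_cycle n A c"
  shows "weight A (\<lambda>k. c ! k) (wlen c) = lam * wlen c"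
proof -
  have w: "is_walk n A c" and l1: "wlen c \<ge> 1"
    using is_cycle_props assms unfolding is_crit_cycle_def by auto
  have "cmean A c = mcm n A" using assms unfolding is_crit_cycle_def by auto
  hence "weight A (\<lambda>k. c ! k) (wlen c) / wlen c = lam" using cmean_list[OF no_PInf_A w] mcm_eq_lam by simp
  thus ?thesis using l1 by (simp add: divide_eq_eq)
qed

lemma crit_arc_rotated_cycle:
  assumes "crit_arc n A x y"
  shows "\<exists>m p. m \<ge> 1 \<and> walk n A p m \<and> p 0 = y \<and> p (m - 1) = x \<and> p m = y \<and> inj_on p {0..<m} \<and>
     (\<forall>k<m. crit_arc n A (p k) (p (Suc k))) \<and> weight A p m = lam * m"
proof -
  obtain c l where c: "is_crit_cycle n A c" "l < wlen c" "c ! l = x" "c ! Suc l = y"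
    using assms unfolding crit_arc_def by blast
  define m where "m = wlen c"
  define p where "p = (\<lambda>k. c ! ((Suc l + k) mod m))"
  note rot = crit_cycle_rotation[OF c(1), of "Suc l", folded m_def]
  have cb: "m \<ge> 1" "c ! m = c ! 0" using is_cycle_props c(1) unfolding is_crit_cycle_def m_def by auto
  have lm: "l < m" using c(2) m_def by simp
  have "p 0 = y" "p (m - 1) = x" "p m = y"
    unfolding p_def using lm cb c(3,4) by (auto simp: mod_Suc)
  moreover have "walk n A p m" unfolding walk_def p_def using rot(2,3) crit_arc_props(3) by blast
  moreover have "weight A p m = lam * m" unfolding p_def using rot(4) weight_crit_cycle[OF c(1)] m_def by simp
  moreover have "inj_on p {0..<m}" "\<forall>k<m. crit_arc n A (p k) (p (Suc k))"
    unfolding p_def using rot(1,2) by auto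
  ultimately show ?thesis using cb(1) by blast
qed

lemma crit_arc_return_walk:
  assumes "crit_arc n A x y"
  shows "\<exists>L h. walk n A h L \<and> h 0 = y \<and> h L = x \<and> weight A h L + real_of_ereal (A x y) = lam * (L + 1)"
proof -
  obtain m p where p: "m \<ge> 1" "walk n A p m" "p 0 = y" "p (m - 1) = x" "p m = y" "weight A p m = lam * m"
    using crit_arc_rotated_cycle[OF assms] by blast
  have "weight A p m = weight A p (m - 1) + real_of_ereal (A x y)"
    using weight_Suc[of A p "m - 1"] p by simp
  moreover have "walk n A p (m - 1)" using walk_prefix[OF p(2)] by simp
  ultimately show ?thesis using p by (intro exI[of _ "m - 1"] exI[of _ p]) simp
qed

lemma crit_arc_finite: "crit_arc n A x y \<Longrightarrow> A x y = ereal (real_of_ereal (A x y))"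
  using crit_arc_props[of n A x y] entries ereal_real_finite by metis

lemma crit_arc_walk_bound:
  assumes ca: "crit_arc n A x y" and P: "submat P A" and f: "walk n P f L" "f 0 = x" "f L = y"
  shows "weight P f L - lam * L \<le> real_of_ereal (A x y) - lam"
proof -
  obtain Lh h where h: "walk n A h Lh" "h 0 = y" "h Lh = x"
      "weight A h Lh + real_of_ereal (A x y) = lam * (Lh + 1)"
    using crit_arc_return_walk[OF ca] by blast
  have "weight A f L + weight A h Lh \<le> lam * (L + Lh)"
    using closed_walk_pair_weight_le[OF submat_walk[OF P f(1)] h(1)] f h by simp
  thus ?thesis using h(4) submat_weight[OF P f(1)] by (simp add: algebra_simps)
qed

lemma weight_walk_cut_ge:
  assumes P: "submat P A" and f: "walk n P f L" and pq: "p \<le> q" "q \<le> L" "f p = f q"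
  shows "weight P f L - lam * L \<le> weight P (walk_cut f p q) (p + (L - q)) - lam * (p + (L - q))"
proof -
  note cut = walk_cut[OF f pq]
  have "weight A (walk_from f p) (q - p) \<le> lam * (q - p)"
    using closed_walk_weight_le[OF submat_walk[OF P cut(1)]] pq by simp
  hence "weight P (walk_from f p) (q - p) \<le> lam * (q - p)" using submat_weight[OF P cut(1)] by simp
  moreover have "lam * real L = lam * real (p + (L - q)) + lam * real (q - p)" using pq
    by (simp add: algebra_simps of_nat_diff)
  ultimately show ?thesis using cut(5) by linarith
qed

text \<open>Pigeonhole: among the nodes visited at multiples of \<open>d\<close> two coincide as soon as \<open>m \<ge> n\<close>,
  and cutting out the closed segment between them keeps the length a multiple of \<open>d\<close>.\<close>

lemma shorten_walk:
  assumes P: "submat P A"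
  shows "walk n P f (m * d) \<Longrightarrow> \<exists>m'<n. \<exists>f'. walk n P f' (m' * d) \<and> f' 0 = f 0 \<and> f' (m' * d) = f (m * d) \<and>
     weight P f (m * d) - lam * (m * d) \<le> weight P f' (m' * d) - lam * (m' * d)"
proof (induction m arbitrary: f rule: less_induct)
  case (less m f)
  show ?case
  proof (cases "m < n")
    case True thus ?thesis using less.prems by (intro exI[of _ m]) auto
  next
    case False
    have "\<not> inj_on (\<lambda>k. f (k * d)) {0..m}"
    proof
      assume inj: "inj_on (\<lambda>k. f (k * d)) {0..m}"
      have "(\<lambda>k. f (k * d)) ` {0..m} \<subseteq> {1..n}" using less.prems unfolding walk_def by auto
      hence "card {0..m} \<le> card {1..n}" by (rule card_inj_on_le[OF inj]) simp
      thus False using False by simp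
    qed
    then obtain i j where ij: "i < j" "j \<le> m" "f (i * d) = f (j * d)"
      unfolding inj_on_def by (metis atLeastAtMost_iff linorder_neqE_nat)
    have pq: "i * d \<le> j * d" "j * d \<le> m * d" using ij by auto
    note cut = walk_cut[OF less.prems pq ij(3)]
    define m2 where "m2 = i + (m - j)"
    have m2: "m2 < m" unfolding m2_def using ij by simp
    have len: "i * d + (m * d - j * d) = m2 * d" unfolding m2_def using ij
      by (simp add: diff_mult_distrib add_mult_distrib)
    obtain m' f' where f': "m' < n" "walk n P f' (m' * d)" "f' 0 = walk_cut f (i * d) (j * d) 0"
      "f' (m' * d) = walk_cut f (i * d) (j * d) (m2 * d)"
      "weight P (walk_cut f (i * d) (j * d)) (m2 * d) - lam * (m2 * d) \<le> weight P f' (m' * d) - lam * (m' * d)"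
      using less.IH[OF m2, of "walk_cut f (i * d) (j * d)"] cut(2) len by auto
    show ?thesis using f' cut(3,4) weight_walk_cut_ge[OF P less.prems pq ij(3)] len
      by (intro exI[of _ m'] conjI exI[of _ f']) auto
  qed
qed

end

locale csr_setting = mp_finite_lambda +
  fixes g :: nat
  assumes A2_less: "mp_sless n (A2_mat n g A) (CSR n (A1_mat n g A) 1)"
    and crit_sc: "crit_strongly_connected n A"
    and crit_gcycle: "(\<forall>k. 1 \<le> k \<and> k < g \<longrightarrow> crit_arc n A k (k + 1)) \<and> crit_arc n A g 1"
    and coprime_g_n: "coprime g n"
    and B1_jump_less: "\<forall>i\<in>{1..n}. \<forall>j\<in>{1..n}. i > g \<and> j > i + 1 \<and> j mod g = (i + 1) mod g \<longrightarrow>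
                 sless (ereal (real (j - i - 1)) * mcm n A + B1_mat g A i j)
                       (mp_pow n (A1_mat n g A) (j - i) i j)"
begin

abbreviation "X \<equiv> A1_mat n g A"
abbreviation "B \<equiv> B1_mat g A"
abbreviation "Y \<equiv> mp_add X B"

lemma submat_X_A: "submat X A" unfolding submat_def A1_mat_def by auto
lemma X_cases: "X a b = A a b \<or> X a b = -\<infinity>" unfolding A1_mat_def by auto
lemma B_cases: "B a b = A a b \<or> B a b = -\<infinity>" unfolding B1_mat_def by auto
lemma Y_cases: "Y a b = A a b \<or> Y a b = -\<infinity>"
  unfolding mp_add_def using X_cases[of a b] B_cases[of a b] by (auto simp: max_def)
lemma submat_Y_A: "submat Y A" unfolding submat_def using Y_cases by blast
lemma submat_X_Y: "submat X Y"
  unfolding submat_def mp_add_def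
proof (intro allI impI)
  fix a b assume "X a b \<noteq> -\<infinity>"
  hence "X a b = A a b" using X_cases by blast
  thus "X a b = max (X a b) (B a b)" using B_cases[of a b] by (auto simp: max_def)
qed

lemma no_PInf_X: "no_PInf n X" using submat_no_PInf[OF submat_X_A no_PInf_A] .
lemma no_PInf_Y: "no_PInf n Y" using submat_no_PInf[OF submat_Y_A no_PInf_A] .

lemma g_pos: "1 \<le> g" and g_le: "g \<le> n"
  using crit_arc_props(1)[of n A g 1] crit_gcycle by auto

lemma n_pos: "1 \<le> n" using g_pos g_le by simp

lemma X_support: "X x y \<noteq> -\<infinity> \<Longrightarrow> (1 \<le> x \<and> x < n \<and> y = x + 1) \<or> (x = n \<and> y = 1) \<or> (x = g \<and> y = 1)"
  unfolding A1_mat_def by (auto split: if_splits)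

lemma X_eq_A: "(1 \<le> x \<and> x < n \<and> y = x + 1) \<or> (x = n \<and> y = 1) \<or> (x = g \<and> y = 1) \<Longrightarrow> X x y = A x y"
  unfolding A1_mat_def by auto

lemma B_support: "B x y \<noteq> -\<infinity> \<Longrightarrow> g < x \<and> g < y \<and> y mod g = (x + 1) mod g \<and> B x y = A x y"
  unfolding B1_mat_def by (auto split: if_splits)

lemma Y_support: "Y x y \<noteq> -\<infinity> \<Longrightarrow> X x y \<noteq> -\<infinity> \<or> B x y \<noteq> -\<infinity>"
  unfolding mp_add_def by (auto simp: max_def split: if_splits)

lemma Y_mod_step: "Y x y \<noteq> -\<infinity> \<Longrightarrow> y mod g = (x + 1) mod g \<or> (x = n \<and> y = 1)"
proof -
  assume "Y x y \<noteq> -\<infinity>"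
  hence "X x y \<noteq> -\<infinity> \<or> B x y \<noteq> -\<infinity>" by (rule Y_support)
  thus ?thesis
  proof
    assume "X x y \<noteq> -\<infinity>"
    hence "(1 \<le> x \<and> x < n \<and> y = x + 1) \<or> (x = n \<and> y = 1) \<or> (x = g \<and> y = 1)"
      by (rule X_support)
    moreover have "(g + 1) mod g = 1 mod g" using mod_add_self1[of g 1] by simp
    ultimately show ?thesis by auto
  next
    assume "B x y \<noteq> -\<infinity>" thus ?thesis using B_support by blast
  qed
qed

lemma X_no_jump: "X x y \<noteq> -\<infinity> \<Longrightarrow> y \<le> x + 1"
  using X_support by fastforce

lemma weight_X_Y: "walk n X f L \<Longrightarrow> weight X f L = weight Y f L" using submat_weight[OF submat_X_Y] .
lemma walk_X_Y: "walk n X f L \<Longrightarrow> walk n Y f L" using submat_walk[OF submat_X_Y] .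

abbreviation gcyc :: "nat \<Rightarrow> nat" where "gcyc \<equiv> up_cycle g"

definition gcyc_arc :: "nat \<Rightarrow> nat \<Rightarrow> bool" where
  "gcyc_arc x y \<longleftrightarrow> x \<in> {1..g} \<and> y = gcyc x"

lemma gcyc_arc_step: "gcyc_arc (gcyc k) (gcyc (Suc k))"
  unfolding gcyc_arc_def using up_cycle_range[of g k] g_pos up_cycle_up_cycle by simp

lemma gcyc_arc_cases: "gcyc_arc x y \<longleftrightarrow> (1 \<le> x \<and> x < g \<and> y = x + 1) \<or> (x = g \<and> y = 1)"
  unfolding gcyc_arc_def using up_cycle_less[of x g] up_cycle_self[of g] g_pos by (cases "x < g") auto

lemma gcyc_arc_crit: "gcyc_arc x y \<Longrightarrow> crit_arc n A x y"
  unfolding gcyc_arc_cases using crit_gcycle by auto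

lemma gcyc_arc_X: "gcyc_arc x y \<Longrightarrow> X x y = A x y"
  unfolding gcyc_arc_cases A1_mat_def using g_le by auto

lemma gcyc_arc_Y: "gcyc_arc x y \<Longrightarrow> Y x y = A x y"
proof -
  assume z: "gcyc_arc x y"
  have "B x y = -\<infinity>" using z unfolding gcyc_arc_cases B1_mat_def by auto
  thus ?thesis using gcyc_arc_X[OF z] by (simp add: mp_add_def)
qed

lemma walk_gcyc: "walk n A gcyc L"
proof -
  have "gcyc k \<in> {1..n}" for k using up_cycle_range[of g k] g_pos g_le by auto
  moreover have "A (gcyc k) (gcyc (Suc k)) \<noteq> -\<infinity>" for k
    using crit_arc_props(3)[OF gcyc_arc_crit[OF gcyc_arc_step]] .
  ultimately show ?thesis unfolding walk_def by blast
qed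

lemma gcyc_return_walk:
  assumes "1 \<le> k" "k \<le> g"
  shows "\<exists>L h. walk n A h L \<and> h 0 = k \<and> h L = 1 \<and>
     weight A h L - lam * L = - (weight A gcyc (k - 1) - lam * (k - 1))"
  using assms
proof (induction k rule: nat_induct_at_least)
  case base
  show ?case by (rule exI[of _ 0], rule exI[of _ "\<lambda>_. 1"]) (use n_pos in \<open>simp add: walk_0\<close>)
next
  case (Suc k)
  then obtain L h where h: "walk n A h L" "h 0 = k" "h L = 1"
     "weight A h L - lam * L = - (weight A gcyc (k - 1) - lam * (k - 1))" by auto
  have kg: "k < g" using Suc by simp
  have z1: "gcyc (k - 1) = k" "gcyc k = k + 1" using up_cycle_less kg Suc(1) by auto
  have ca: "crit_arc n A k (Suc k)" using gcyc_arc_crit[of k "Suc k"] kg Suc(1) unfolding gcyc_arc_cases by simp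
  obtain L' h' where h': "walk n A h' L'" "h' 0 = Suc k" "h' L' = k"
     "weight A h' L' + real_of_ereal (A k (Suc k)) = lam * (L' + 1)" using crit_arc_return_walk[OF ca] by blast
  note app = walk_append[OF h'(1) h(1), unfolded h'(3) h(2), OF refl]
  have "weight A gcyc k = weight A gcyc (k - 1) + real_of_ereal (A k (Suc k))"
    using weight_Suc[of A gcyc "k - 1"] z1 Suc(1) by simp
  thus ?case using app h h' Suc(1)
    by (intro exI[of _ "L' + L"] exI[of _ "walk_append h' L' h"]) (simp add: algebra_simps of_nat_diff)
qed

text \<open>The cycle \<open>(1, \<dots>, g, 1)\<close> is critical: closing a walk along it with the return walks of its
  critical arcs gives the reverse inequality.\<close>

lemma weight_gcyc: "weight A gcyc g = lam * g"
proof -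
  obtain L h where h: "walk n A h L" "h 0 = g" "h L = 1"
     "weight A h L - lam * L = - (weight A gcyc (g - 1) - lam * (g - 1))" using gcyc_return_walk[of g] g_pos by auto
  have ca: "crit_arc n A g 1" using crit_gcycle by simp
  obtain L' h' where h': "walk n A h' L'" "h' 0 = 1" "h' L' = g"
     "weight A h' L' + real_of_ereal (A g 1) = lam * (L' + 1)" using crit_arc_return_walk[OF ca] by blast
  have wz: "weight A gcyc g = weight A gcyc (g - 1) + real_of_ereal (A g 1)"
    using weight_Suc[of A gcyc "g - 1"] up_cycle_less[of "g - 1" g] up_cycle_self[of g] g_pos by simp
  have "weight A h' L' + weight A h L \<le> lam * (L' + L)" using closed_walk_pair_weight_le[OF h'(1) h(1)] h h' by simp
  hence ge: "weight A gcyc g \<ge> lam * g" using h(4) h'(4) wz g_pos by (simp add: algebra_simps of_nat_diff)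
  have "weight A gcyc g \<le> lam * g" using closed_walk_weight_le[OF walk_gcyc] up_cycle_self
    by (simp add: up_cycle_def)
  thus ?thesis using ge by simp
qed

definition keeps_gcyc :: "mpmat \<Rightarrow> bool" where
  "keeps_gcyc P \<longleftrightarrow> submat P A \<and> (\<forall>x y. gcyc_arc x y \<longrightarrow> P x y = A x y)"

lemma keeps_gcyc_X: "keeps_gcyc X" unfolding keeps_gcyc_def using submat_X_A gcyc_arc_X by blast
lemma keeps_gcyc_Y: "keeps_gcyc Y" unfolding keeps_gcyc_def using submat_Y_A gcyc_arc_Y by blast

lemma walk_gcyc_keeps_gcyc: "keeps_gcyc P \<Longrightarrow> walk n P gcyc L"
  using walk_gcyc gcyc_arc_step unfolding walk_def keeps_gcyc_def by simp

lemma gcyc_list_cycle: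
  assumes P: "keeps_gcyc P"
  shows "is_cycle n P (up_cycle_list g)" "cmean P (up_cycle_list g) = ereal lam"
proof -
  have sub: "submat P A" using P unfolding keeps_gcyc_def by blast
  show "is_cycle n P (up_cycle_list g)" using up_cycle_list_cycle[OF _ walk_gcyc_keeps_gcyc[OF P]] g_pos by simp
  have "weight P gcyc g = weight A gcyc g" using submat_weight[OF sub walk_gcyc_keeps_gcyc[OF P]] .
  thus "cmean P (up_cycle_list g) = ereal lam"
    using cmean_up_cycle_list[OF submat_no_PInf[OF sub no_PInf_A] _ walk_gcyc_keeps_gcyc[OF P]] g_pos weight_gcyc
    by simp
qed

lemma mcm_keeps_gcyc:
  assumes P: "keeps_gcyc P"
  shows "mcm n P = ereal lam"
proof (rule antisym)
  have sub: "submat P A" using P unfolding keeps_gcyc_def by blast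
  show "mcm n P \<le> ereal lam" unfolding mcm_def
  proof (rule Sup_least)
    fix x assume "x \<in> {cmean P c |c. is_cycle n P c}"
    then obtain c where c: "x = cmean P c" "is_cycle n P c" by auto
    have "cmean A c \<le> mcm n A" unfolding mcm_def by (rule Sup_upper) (use submat_cycle[OF sub c(2)] in auto)
    thus "x \<le> ereal lam" using c submat_cycle[OF sub c(2)] mcm_eq_lam by simp
  qed
  have "cmean P (up_cycle_list g) \<in> {cmean P c |c. is_cycle n P c}" using gcyc_list_cycle(1)[OF P] by blast
  hence "cmean P (up_cycle_list g) \<le> mcm n P" unfolding mcm_def by (rule Sup_upper)
  thus "ereal lam \<le> mcm n P" using gcyc_list_cycle(2)[OF P] by simp
qed

lemma gcyc_list_crit: "keeps_gcyc P \<Longrightarrow> is_crit_cycle n P (up_cycle_list g)"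
  unfolding is_crit_cycle_def using gcyc_list_cycle mcm_keeps_gcyc by simp

lemma gcyc_arc_crit_keeps_gcyc:
  assumes P: "keeps_gcyc P" and xy: "gcyc_arc x y"
  shows "crit_arc n P x y"
proof -
  have "gcyc (x - 1) = x" "gcyc x = y" using xy up_cycle_less[of "x - 1" g] unfolding gcyc_arc_def by auto
  thus ?thesis using crit_arc_up_cycle[OF gcyc_list_crit[OF P] _, of "x - 1"] g_pos xy
    unfolding gcyc_arc_def by simp
qed

lemma mcm_X: "mcm n X = ereal lam" by (rule mcm_keeps_gcyc[OF keeps_gcyc_X])
lemma mcm_Y: "mcm n Y = ereal lam" by (rule mcm_keeps_gcyc[OF keeps_gcyc_Y])

end

context csr_setting
begin

lemma crit_arc_Y:
  assumes ca: "crit_arc n A x y"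
  shows "Y x y \<noteq> -\<infinity>"
proof
  assume Y: "Y x y = -\<infinity>"
  have xy: "x \<in> {1..n}" "y \<in> {1..n}" using crit_arc_props[OF ca] by auto
  have "sless (A2_mat n g A x y) (CSR n X 1 x y)" using A2_less xy unfolding mp_sless_def by blast
  moreover have "A2_mat n g A x y = A x y" using Y unfolding A2_mat_def by simp
  ultimately have sl: "sless (A x y) (CSR n X 1 x y)" by simp
  obtain a where a: "A x y = ereal a" using crit_arc_finite[OF ca] by blast
  have "CSR n X 1 x y \<le> ereal a"
  proof (rule ereal_le_real_by_lower_bounds[OF CSR_not_PInf[OF mcm_X no_PInf_X xy]])
    fix c assume "ereal c \<le> CSR n X 1 x y"
    then obtain L f where f: "walk n X f L" "f 0 = x" "f L = y" "c \<le> weight X f L - lam * L + lam * real 1"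
      using CSR_witness[OF mcm_X no_PInf_X xy] by blast
    thus "c \<le> a" using crit_arc_walk_bound[OF ca submat_X_A f(1-3)] a by simp
  qed
  moreover have "ereal a \<le> CSR n X 1 x y" using sl a unfolding sless_def by simp
  ultimately have "CSR n X 1 x y = ereal a" by (rule antisym)
  thus False using sl a unfolding sless_def by simp
qed

lemma B_jump_X_walk:
  assumes xy: "x \<in> {1..n}" "y \<in> {1..n}" and jump: "y > x + 1" and b: "B x y \<noteq> -\<infinity>"
  obtains u where "walk n X u (y - x)" "u 0 = x" "u (y - x) = y"
    "real_of_ereal (A x y) - lam < weight X u (y - x) - lam * (y - x)"
proof -
  have b: "g < x" "y mod g = (x + 1) mod g" "B x y = A x y" using B_support[OF b] by auto
  obtain a where a: "A x y = ereal a" using b(3) assms(4) entries xy by (cases "A x y") auto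
  have "sless (ereal (real (y - x - 1)) * mcm n A + B x y) (mp_pow n X (y - x) x y)"
    using B1_jump_less xy b jump by blast
  moreover have "ereal (real (y - x - 1)) * mcm n A + B x y = ereal (real (y - x - 1) * lam + a)"
    using b(3) a mcm_eq_lam by simp
  ultimately have "ereal (real (y - x - 1) * lam + a) < mp_pow n X (y - x) x y"
    unfolding sless_def by (metis order_less_le MInfty_neq_ereal(1))
  moreover note pow = max_walks_pow_self[OF no_PInf_X, of "y - x"]
  ultimately obtain v where v: "mp_pow n X (y - x) x y = ereal v" "real (y - x - 1) * lam + a < v"
    using max_walks_not_PInf[OF pow xy] by (cases "mp_pow n X (y - x) x y") auto
  obtain u where u: "walk n X u (y - x)" "u 0 = x" "u (y - x) = y" "v \<le> weight X u (y - x)"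
    using max_walks_witness[OF pow xy, of v] v(1) by auto
  moreover have "real (y - x - 1) = real (y - x) - 1" using jump by simp
  ultimately show ?thesis using that v(2) a by (simp add: algebra_simps)
qed

lemma crit_arc_B_no_jump:
  assumes ca: "crit_arc n A x y" and b: "B x y \<noteq> -\<infinity>"
  shows "y \<le> x + 1"
proof (rule ccontr)
  assume "\<not> y \<le> x + 1"
  hence jump: "y > x + 1" by simp
  have xy: "x \<in> {1..n}" "y \<in> {1..n}" using crit_arc_props[OF ca] by auto
  obtain u where "walk n X u (y - x)" "u 0 = x" "u (y - x) = y"
    "real_of_ereal (A x y) - lam < weight X u (y - x) - lam * (y - x)"
    using B_jump_X_walk[OF xy jump b] by blast
  thus False using crit_arc_walk_bound[OF ca submat_X_A] by fastforce
qed

definition crit_arc_shape :: "nat \<Rightarrow> nat \<Rightarrow> bool" where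
  "crit_arc_shape x y \<longleftrightarrow> (1 \<le> x \<and> x < n \<and> y = x + 1) \<or> (x = n \<and> y = 1) \<or> (x = g \<and> y = 1) \<or>
     (g < y \<and> y \<le> x \<and> y mod g = (x + 1) mod g)"

lemma crit_arc_shape_A:
  assumes ca: "crit_arc n A x y"
  shows "crit_arc_shape x y"
proof -
  have xy: "x \<in> {1..n}" "y \<in> {1..n}" using crit_arc_props[OF ca] by auto
  from Y_support[OF crit_arc_Y[OF ca]] show ?thesis
  proof
    assume "X x y \<noteq> -\<infinity>" thus ?thesis using X_support unfolding crit_arc_shape_def by blast
  next
    assume b: "B x y \<noteq> -\<infinity>"
    have le: "y \<le> x + 1" by (rule crit_arc_B_no_jump[OF ca b])
    have s: "g < y" "y mod g = (x + 1) mod g" using B_support[OF b] by auto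
    show ?thesis
    proof (cases "y = x + 1")
      case True thus ?thesis using xy unfolding crit_arc_shape_def by auto
    next
      case False thus ?thesis using le s unfolding crit_arc_shape_def by auto
    qed
  qed
qed

end

context csr_setting
begin

section \<open>The case of a critical arc \<open>(n, 1)\<close>\<close>

text \<open>Every critical arc either steps up by one or leads back to a node at most its tail
  (\<open>crit_arc_shape_A\<close>); so a critical cycle entered at \<open>1\<close> that must not revisit nodes
  climbs \<open>1, 2, 3, \<dots>\<close> until it leaves through \<open>n\<close>.\<close>

lemma crit_cycle_from_1_climbs:
  assumes m: "1 \<le> m" and p0: "p 0 = 1" and p_last: "p (m - 1) = n" and inj: "inj_on p {0..<m}"
    and crit: "\<forall>k<m. crit_arc n A (p k) (p (Suc k))" and k: "k \<le> n - 1"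
  shows "\<forall>j\<le>k. j < m \<and> p j = j + 1"
  using k
proof (induction k)
  case 0 thus ?case using m p0 by simp
next
  case (Suc k)
  hence IH: "\<forall>j\<le>k. j < m \<and> p j = j + 1" by simp
  have pk: "p k = k + 1" "k < m" using IH by auto
  have "k \<noteq> m - 1" using pk p_last Suc.prems by auto
  hence km: "Suc k < m" using pk by simp
  have inj0: "i = j" if "i < m" "j < m" "p i = p j" for i j
    using inj_onD[OF inj, of i j] that by auto
  have "crit_arc_shape (p k) (p (Suc k))" using crit_arc_shape_A crit pk(2) by blast
  then consider "p (Suc k) = Suc k + 1" | "Suc k = n" | "Suc k = g" "p (Suc k) = 1"
    | "g < p (Suc k)" "p (Suc k) \<le> Suc k"
    unfolding crit_arc_shape_def pk(1) by auto
  hence "p (Suc k) = Suc k + 1"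
  proof cases
    case 2 thus ?thesis using Suc.prems n_pos by simp
  next
    case 3 thus ?thesis using inj0[of "Suc k" 0] km p0 by simp
  next
    case 4
    hence "p (p (Suc k) - 1) = p (Suc k)" "p (Suc k) - 1 < m" using IH g_pos by auto
    hence "p (Suc k) - 1 = Suc k" using inj0 km by blast
    thus ?thesis using 4 g_pos by simp
  qed
  thus ?case using IH km le_Suc_eq by auto
qed

end

locale csr_ham = csr_setting +
  assumes crit_n_1: "crit_arc n A n 1"
begin

abbreviation ncyc :: "nat \<Rightarrow> nat" where "ncyc \<equiv> up_cycle n"

lemma ncyc_is_crit_cycle: "walk n A ncyc n" "weight A ncyc n = lam * n"
proof -
  obtain m p where p: "m \<ge> 1" "walk n A p m" "p 0 = 1" "p (m - 1) = n" "p m = 1" "inj_on p {0..<m}"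
    "\<forall>k<m. crit_arc n A (p k) (p (Suc k))" "weight A p m = lam * m"
    using crit_arc_rotated_cycle[OF crit_n_1] by blast
  have climb: "\<forall>j\<le>n - 1. j < m \<and> p j = j + 1"
    using crit_cycle_from_1_climbs[OF p(1,3,4,6,7) order_refl] .
  hence "p (n - 1) = p (m - 1)" using p(4) n_pos by simp
  moreover have "n - 1 < m" using climb by blast
  ultimately have "n - 1 = m - 1" using inj_onD[OF p(6)] p(1) by simp
  hence mn: "m = n" using p(1) n_pos by simp
  have "p k = ncyc k" if "k \<le> n" for k
  proof (cases "k = n")
    case True thus ?thesis using p(5) mn up_cycle_self by simp
  next
    case False thus ?thesis using climb that up_cycle_less by simp
  qed
  thus "walk n A ncyc n" "weight A ncyc n = lam * n"
    using p(2,8) mn walk_cong[of n p ncyc n A] weight_cong[of n p ncyc A] by simp_all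
qed

lemma ncyc_X: "X (ncyc k) (ncyc (Suc k)) = A (ncyc k) (ncyc (Suc k))"
proof (rule X_eq_A)
  have "ncyc k \<in> {1..n}" using up_cycle_range n_pos by simp
  moreover have "ncyc (Suc k) = (if ncyc k < n then ncyc k + 1 else 1)" using up_cycle_Suc n_pos by simp
  ultimately show "(1 \<le> ncyc k \<and> ncyc k < n \<and> ncyc (Suc k) = ncyc k + 1) \<or> (ncyc k = n \<and> ncyc (Suc k) = 1) \<or>
      (ncyc k = g \<and> ncyc (Suc k) = 1)"
    by (cases "ncyc k < n") auto
qed

lemma walk_ncyc: "walk n X ncyc L"
proof -
  have arcs: "\<forall>k<n. A (ncyc k) (ncyc (Suc k)) \<noteq> -\<infinity>" using ncyc_is_crit_cycle(1)
    unfolding walk_def by blast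
  have "X (ncyc k) (ncyc (Suc k)) \<noteq> -\<infinity>" for k
  proof -
    have "k mod n < n" using n_pos by simp
    hence "A (ncyc (k mod n)) (ncyc (Suc (k mod n))) \<noteq> -\<infinity>" using arcs by blast
    thus ?thesis using ncyc_X[of k] up_cycle_mod[of n k] up_cycle_Suc_mod[of n k] by simp
  qed
  moreover have "ncyc k \<in> {1..n}" for k using up_cycle_range n_pos by simp
  ultimately show ?thesis unfolding walk_def by blast
qed

definition pot :: "nat \<Rightarrow> real" where "pot x = weight A ncyc (x - 1) - lam * (x - 1)"

lemma pot_tight_succ:
  assumes x: "1 \<le> x" "x \<le> n"
  shows "real_of_ereal (A x (ncyc x)) - lam = pot (ncyc x) - pot x"
proof (cases "x < n")
  case True
  have "weight A ncyc x = weight A ncyc (x - 1) + real_of_ereal (A (ncyc (x - 1)) (ncyc x))"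
    using weight_Suc[of A ncyc "x - 1"] x by simp
  moreover have "ncyc (x - 1) = x" "ncyc x = x + 1" using up_cycle_less True x by auto
  ultimately show ?thesis using True x unfolding pot_def by (simp add: of_nat_diff algebra_simps)
next
  case False
  hence xn: "x = n" using x by simp
  have "weight A ncyc n = weight A ncyc (n - 1) + real_of_ereal (A (ncyc (n - 1)) (ncyc n))"
    using weight_Suc[of A ncyc "n - 1"] n_pos by simp
  moreover have "ncyc (n - 1) = n" "ncyc n = 1" using up_cycle_less up_cycle_self n_pos by auto
  ultimately show ?thesis using xn ncyc_is_crit_cycle(2) n_pos unfolding pot_def
    by (simp add: of_nat_diff algebra_simps)
qed

lemma pot_tight_g: "real_of_ereal (A g 1) - lam = pot 1 - pot g"
proof -
  have "weight A gcyc g = weight A gcyc (g - 1) + real_of_ereal (A (gcyc (g - 1)) (gcyc g))"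
    using weight_Suc[of A gcyc "g - 1"] g_pos by simp
  moreover have "gcyc (g - 1) = g" "gcyc g = 1" using up_cycle_less up_cycle_self g_pos by auto
  moreover have "weight A gcyc (g - 1) = weight A ncyc (g - 1)"
    by (rule weight_cong) (use g_pos g_le up_cycle_less in auto)
  ultimately show ?thesis using weight_gcyc g_pos unfolding pot_def by (simp add: of_nat_diff algebra_simps)
qed

lemma pot_tight_X:
  assumes "X x y \<noteq> -\<infinity>"
  shows "real_of_ereal (X x y) - lam = pot y - pot x"
proof -
  have s: "(1 \<le> x \<and> x < n \<and> y = x + 1) \<or> (x = n \<and> y = 1) \<or> (x = g \<and> y = 1)"
    using X_support assms by blast
  have e: "X x y = A x y" by (rule X_eq_A[OF s])
  show ?thesis using s
  proof (elim disjE)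
    assume "1 \<le> x \<and> x < n \<and> y = x + 1" thus ?thesis
      using pot_tight_succ[of x] up_cycle_less[of x n] e by auto
  next
    assume "x = n \<and> y = 1" thus ?thesis using pot_tight_succ[of n] up_cycle_self[of n] e n_pos by auto
  next
    assume "x = g \<and> y = 1" thus ?thesis using pot_tight_g e by auto
  qed
qed

lemma weight_X_telescope: "walk n X f L \<Longrightarrow> weight X f L - lam * L = pot (f L) - pot (f 0)"
proof (induction L)
  case (Suc L)
  have "X (f L) (f (Suc L)) \<noteq> -\<infinity>" using Suc.prems unfolding walk_def by auto
  hence "real_of_ereal (X (f L) (f (Suc L))) - lam = pot (f (Suc L)) - pot (f L)" by (rule pot_tight_X)
  thus ?case using Suc walk_prefix[of n X f "Suc L" L] weight_Suc[of X f L] by (simp add: algebra_simps)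
qed simp

lemma X_pow_le_pot:
  assumes xy: "x \<in> {1..n}" "y \<in> {1..n}"
  shows "mp_pow n X L x y \<le> ereal (pot y - pot x + lam * L)"
proof (rule ereal_le_real_by_lower_bounds[OF max_walks_not_PInf[OF max_walks_pow_self[OF no_PInf_X] xy]])
  fix c assume "ereal c \<le> mp_pow n X L x y"
  then obtain f where f: "walk n X f L" "f 0 = x" "f L = y" "c \<le> weight X f L"
    using max_walks_witness[OF max_walks_pow_self[OF no_PInf_X] xy] by blast
  thus "c \<le> pot y - pot x + lam * L" using weight_X_telescope[OF f(1)] by simp
qed

text \<open>A backward \<open>B\<close>-arc closes a cycle with the segment \<open>y, \<dots>, x\<close> of the Hamiltonian cycle.\<close>

lemma pot_bound_backward_arc:
  assumes xy: "x \<in> {1..n}" "y \<in> {1..n}" "y \<le> x" and a: "A x y = ereal a"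
  shows "a - lam \<le> pot y - pot x"
proof -
  define h where "h = (\<lambda>k::nat. if k = 0 then x else y)"
  have vh: "walk n A h 1" unfolding walk_def h_def using xy a by (auto simp: le_Suc_eq)
  have wh: "weight A h 1 = a" unfolding weight_def h_def using a by simp
  have vz: "walk n A ncyc (x - 1)" using submat_walk[OF submat_X_A walk_ncyc] .
  note cut = walk_cut[OF vz, of "y - 1" "y - 1"]
  have vs: "walk n A (walk_from ncyc (y - 1)) (x - y)"
    using walk_walk_from[OF vz, of "y - 1"] xy by (simp add: diff_diff_cancel)
  have e1: "walk_from ncyc (y - 1) (x - y) = h 0" using up_cycle_less[of "x - 1" n] xy unfolding h_def by simp
  have e2: "h 1 = walk_from ncyc (y - 1) 0" using up_cycle_less[of "y - 1" n] xy unfolding h_def by simp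
  have "weight A (walk_from ncyc (y - 1)) (x - y) + weight A h 1 \<le> lam * ((x - y) + 1)"
    using closed_walk_pair_weight_le[OF vs vh e1 e2] by (simp del: walk_from_apply)
  moreover have "weight A ncyc (x - 1) = weight A ncyc (y - 1) + weight A (walk_from ncyc (y - 1)) (x - y)"
    using weight_split[of "y - 1" "x - 1" A ncyc] xy by (simp add: diff_diff_cancel)
  ultimately show ?thesis using wh xy unfolding pot_def by (simp add: of_nat_diff algebra_simps)
qed

lemma pot_bound_forward_jump:
  assumes xy: "x \<in> {1..n}" "y \<in> {1..n}" and jump: "y > x + 1" and b: "B x y \<noteq> -\<infinity>"
    and a: "A x y = ereal a"
  shows "a - lam \<le> pot y - pot x"
proof -
  have b: "g < x" "y mod g = (x + 1) mod g" "B x y = A x y" using B_support[OF b] by auto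
  have "sless (ereal (real (y - x - 1)) * mcm n A + B x y) (mp_pow n X (y - x) x y)"
    using B1_jump_less xy b jump by blast
  hence "ereal (real (y - x - 1) * lam + a) \<le> mp_pow n X (y - x) x y"
    using a b(3) mcm_eq_lam unfolding sless_def by simp
  also have "\<dots> \<le> ereal (pot y - pot x + lam * (y - x))" by (rule X_pow_le_pot[OF xy])
  finally have "real (y - x - 1) * lam + a \<le> pot y - pot x + lam * (y - x)" by simp
  moreover have "real (y - x - 1) = real (y - x) - 1" using jump by simp
  ultimately show ?thesis by (simp add: algebra_simps)
qed

lemma pot_bound_Y:
  assumes xy: "x \<in> {1..n}" "y \<in> {1..n}" and yf: "Y x y \<noteq> -\<infinity>"
  shows "real_of_ereal (Y x y) - lam \<le> pot y - pot x"
proof (cases "X x y \<noteq> -\<infinity>")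
  case True
  hence "Y x y = X x y" using submat_X_Y unfolding submat_def by metis
  thus ?thesis using pot_tight_X[OF True] by simp
next
  case False
  hence Bf: "B x y \<noteq> -\<infinity>" using Y_support[OF yf] by blast
  have YA: "Y x y = A x y" using submat_Y_A yf unfolding submat_def by metis
  obtain a where a: "A x y = ereal a" using YA yf entries xy by (cases "A x y") auto
  have "y \<noteq> x + 1"
  proof
    assume "y = x + 1"
    hence "X x y = A x y" using xy by (intro X_eq_A) auto
    thus False using False a by simp
  qed
  hence "y \<le> x \<or> y > x + 1" by auto
  thus ?thesis using pot_bound_backward_arc[OF xy _ a] pot_bound_forward_jump[OF xy _ Bf a] YA a by auto
qed

lemma weight_le_pot:
  assumes "submat P Y" "walk n P f L"
  shows "weight P f L - lam * L \<le> pot (f L) - pot (f 0)"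
proof -
  have "weight Y f L - lam * L \<le> pot (f L) - pot (f 0)" if "walk n Y f L" for f L
    using that
  proof (induction L)
    case (Suc L)
    have "Y (f L) (f (Suc L)) \<noteq> -\<infinity>" "f L \<in> {1..n}" "f (Suc L) \<in> {1..n}" using Suc.prems
      unfolding walk_def by auto
    hence "real_of_ereal (Y (f L) (f (Suc L))) - lam \<le> pot (f (Suc L)) - pot (f L)" using pot_bound_Y by blast
    thus ?case using Suc walk_prefix[of n Y f "Suc L" L] weight_Suc[of Y f L] by (simp add: algebra_simps)
  qed simp
  thus ?thesis using submat_walk[OF assms] submat_weight[OF assms] by simp
qed

end

context csr_ham
begin

definition between_X_Y :: "mpmat \<Rightarrow> bool" where
  "between_X_Y P \<longleftrightarrow> keeps_gcyc P \<and> submat X P \<and> submat P Y"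

lemma between_X_Y_X: "between_X_Y X" unfolding between_X_Y_def using keeps_gcyc_X submat_X_Y submat_refl by blast
lemma between_X_Y_Y: "between_X_Y Y" unfolding between_X_Y_def using keeps_gcyc_Y submat_X_Y submat_refl by blast

lemma ncyc_list_crit:
  assumes P: "between_X_Y P"
  shows "is_crit_cycle n P (up_cycle_list n)"
proof -
  have sub: "submat X P" and kg: "keeps_gcyc P" using P unfolding between_X_Y_def by auto
  have w: "walk n P ncyc n" using submat_walk[OF sub walk_ncyc] .
  have "weight P ncyc n = weight A ncyc n"
    using submat_weight[OF sub walk_ncyc] submat_weight[OF submat_X_A walk_ncyc] by simp
  hence "cmean P (up_cycle_list n) = ereal lam"
    using cmean_up_cycle_list[OF submat_no_PInf[OF _ no_PInf_A] _ w] kg ncyc_is_crit_cycle(2) n_pos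
    unfolding keeps_gcyc_def by simp
  thus ?thesis unfolding is_crit_cycle_def using up_cycle_list_cycle[OF _ w] n_pos mcm_keeps_gcyc[OF kg] by simp
qed

lemma ncyc_crit_arc: "between_X_Y P \<Longrightarrow> crit_arc n P (ncyc k) (ncyc (Suc k))"
  using crit_arc_up_cycle[OF ncyc_list_crit] n_pos by simp

lemma ham_crit_node: "between_X_Y P \<Longrightarrow> v \<in> {1..n} \<Longrightarrow> crit_node n P v"
  using crit_arc_nodes[OF ncyc_crit_arc, of P "v - 1"] up_cycle_less[of "v - 1" n] by auto

lemma cyclicity_eq_1:
  assumes P: "between_X_Y P"
  shows "cyclicity_crit n P = 1"
proof (rule cyclicity_crit_eq)
  show "crit_comps n P \<noteq> {}" using ham_crit_node[OF P, of 1] n_pos unfolding crit_comps_def by auto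
  fix C assume "C \<in> crit_comps n P"
  then obtain i where i: "crit_node n P i" "C = crit_comp n P i" unfolding crit_comps_def by blast
  have "i \<in> {1..n}" using i(1) crit_cycle_nodes unfolding crit_node_def by blast
  moreover have "(a, b) \<in> (crit_rel n P)\<^sup>*" if "a \<in> {1..n}" "b \<in> {1..n}" for a b
    using up_cycle_reach[OF _ _ that] ncyc_crit_arc[OF P] n_pos unfolding crit_rel_def by simp
  ultimately have sub: "{1..n} \<subseteq> C" unfolding i(2) crit_comp_def using ham_crit_node[OF P] by auto
  have "n \<in> comp_cycle_lens n P C" using up_cycle_len_in_comp[OF ncyc_list_crit[OF P] _ sub] n_pos by simp
  moreover have "g \<in> comp_cycle_lens n P C"
  proof (rule up_cycle_len_in_comp[OF gcyc_list_crit])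
    show "keeps_gcyc P" using P unfolding between_X_Y_def by blast
    show "0 < g" "{1..g} \<subseteq> C" using g_pos g_le sub by auto
  qed
  ultimately have "Gcd (comp_cycle_lens n P C) dvd gcd g n" by (meson Gcd_dvd gcd_greatest)
  thus "Gcd (comp_cycle_lens n P C) = 1" using coprime_g_n by simp
qed

text \<open>The potential makes every critical-graph entry explicit: \<open>M\<close>, and hence \<open>CS\<^sup>tR\<close>, are
  the same for \<open>A\<^sub>1\<close> and \<open>A\<^sub>1 \<oplus> B\<^sub>1\<close>.\<close>

lemma M_mat_eq_pot:
  assumes P: "between_X_Y P" and ab: "a \<in> {1..n}" "b \<in> {1..n}"
  shows "M_mat n P a b = ereal (pot b - pot a)"
proof -
  have sub: "keeps_gcyc P" "submat X P" "submat P Y" using P unfolding between_X_Y_def by auto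
  have mc: "mcm n P = ereal lam" using mcm_keeps_gcyc sub by blast
  have fP: "no_PInf n P" using submat_no_PInf sub no_PInf_A unfolding keeps_gcyc_def by blast
  have cy: "cyclicity_crit n P = 1" using cyclicity_eq_1[OF P] .
  show ?thesis
  proof (rule antisym)
    show "M_mat n P a b \<le> ereal (pot b - pot a)"
    proof (rule ereal_le_real_by_lower_bounds[OF M_mat_not_PInf[OF mc fP ab]])
      fix x assume "ereal x \<le> M_mat n P a b"
      then obtain m f where f: "walk n P f (m * cyclicity_crit n P)" "f 0 = a" "f (m * cyclicity_crit n P) = b"
        "x \<le> weight P f (m * cyclicity_crit n P) - lam * (m * cyclicity_crit n P)"
        using M_mat_witness[OF mc fP ab] by blast
      thus "x \<le> pot b - pot a" using weight_le_pot[OF sub(3) f(1)] by simp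
    qed
    define L where "L = (b + n - a) mod n"
    have Ln: "L < n" unfolding L_def using n_pos by simp
    have "(L + (a - 1)) mod n = ((b + n - a) + (a - 1)) mod n" unfolding L_def by (rule mod_add_left_eq)
    also have "(b + n - a) + (a - 1) = (b - 1) + n" using ab by auto
    finally have "(L + (a - 1)) mod n = (b - 1) mod n" by simp
    also have "(b - 1) mod n = b - 1" using ab by (intro mod_less) auto
    finally have "(L + (a - 1)) mod n = b - 1" .
    hence last: "walk_from ncyc (a - 1) L = b"
      using up_cycle_mod[of n "L + (a - 1)"] up_cycle_less[of "b - 1" n] ab by (simp add: Suc_le_lessD)
    have v: "walk n X (walk_from ncyc (a - 1)) L" using walk_walk_from[OF walk_ncyc, of "a - 1" "L + (a - 1)"] by simp
    have "ereal (weight P (walk_from ncyc (a - 1)) L - lam * L) \<le>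
        M_mat n P (walk_from ncyc (a - 1) 0) (walk_from ncyc (a - 1) L)"
      using M_mat_ge_weight[OF mc fP Ln, of "walk_from ncyc (a - 1)"] submat_walk[OF sub(2) v] cy by simp
    moreover have "weight P (walk_from ncyc (a - 1)) L = weight X (walk_from ncyc (a - 1)) L"
      using submat_weight[OF sub(2) v] by simp
    moreover have "walk_from ncyc (a - 1) 0 = a" using up_cycle_less[of "a - 1" n] ab by (simp add: Suc_le_lessD)
    ultimately show "ereal (pot b - pot a) \<le> M_mat n P a b"
      using weight_X_telescope[OF v] last by simp
  qed
qed

lemma CSR_le_pot:
  assumes P: "between_X_Y P" and ab: "a \<in> {1..n}" "b \<in> {1..n}"
  shows "CSR n P t a b \<le> ereal (lam * t + pot b - pot a)"
proof -
  have sub: "submat P Y" "keeps_gcyc P" using P unfolding between_X_Y_def by auto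
  have mc: "mcm n P = ereal lam" and fP: "no_PInf n P"
    using mcm_keeps_gcyc[OF sub(2)] submat_no_PInf[OF _ no_PInf_A] sub(2) unfolding keeps_gcyc_def by auto
  show ?thesis
  proof (rule ereal_le_real_by_lower_bounds[OF CSR_not_PInf[OF mc fP ab]])
    fix x assume "ereal x \<le> CSR n P t a b"
    then obtain L f where f: "walk n P f L" "f 0 = a" "f L = b" "x \<le> weight P f L - lam * L + lam * t"
      using CSR_witness[OF mc fP ab] by blast
    thus "x \<le> lam * t + pot b - pot a" using weight_le_pot[OF sub(1) f(1)] by simp
  qed
qed

text \<open>For the lower bound, walk \<open>t\<close> steps from \<open>a\<close> along the Hamiltonian cycle, whose arcs are
  critical, and close the path with the entries of \<open>C\<close> and \<open>R\<close>.\<close>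

lemma CSR_ge_pot:
  assumes P: "between_X_Y P" and ab: "a \<in> {1..n}" "b \<in> {1..n}"
  shows "ereal (lam * t + pot b - pot a) \<le> CSR n P t a b"
proof -
  have sub: "submat X P" "keeps_gcyc P" using P unfolding between_X_Y_def by auto
  have mc: "mcm n P = ereal lam" and fP: "no_PInf n P"
    using mcm_keeps_gcyc[OF sub(2)] submat_no_PInf[OF _ no_PInf_A] sub(2) unfolding keeps_gcyc_def by auto
  define f where "f = walk_from ncyc (a - 1)"
  define l where "l = f t"
  have f0: "f 0 = a" unfolding f_def using up_cycle_less[of "a - 1" n] ab by (simp add: Suc_le_lessD)
  have l1: "l \<in> {1..n}" unfolding l_def f_def using up_cycle_range n_pos by simp
  have vX: "walk n X f t" unfolding f_def using walk_walk_from[OF walk_ncyc, of "a - 1" "t + (a - 1)"] by simp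
  have SP: "S_mat n P (f k) (f (Suc k)) = X (f k) (f (Suc k))" for k
  proof -
    have "X (f k) (f (Suc k)) \<noteq> -\<infinity>" using walk_ncyc[of "Suc (k + (a - 1))"]
      unfolding walk_def f_def by simp
    hence "P (f k) (f (Suc k)) = X (f k) (f (Suc k))" using sub(1) unfolding submat_def by metis
    thus ?thesis unfolding S_mat_def f_def using ncyc_crit_arc[OF P, of "k + (a - 1)"] by simp
  qed
  have vS: "walk n (S_mat n P) f t" using vX SP unfolding walk_def by simp
  have "weight (S_mat n P) f t = weight X f t" unfolding weight_def using SP by simp
  also have "\<dots> = lam * t + pot l - pot a" using weight_X_telescope[OF vX] f0 l_def by simp
  finally have St: "ereal (lam * t + pot l - pot a) \<le> mp_pow n (S_mat n P) t a l"
    using max_walks_upper[OF max_walks_S_pow[OF fP] vS] f0 l_def by metis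
  have Ca: "C_mat n P a a = ereal 0"
    unfolding C_mat_def using ham_crit_node[OF P ab(1)] M_mat_eq_pot[OF P ab(1) ab(1)] by simp
  have Rl: "R_mat n P l b = ereal (pot b - pot l)"
    unfolding R_mat_def using ham_crit_node[OF P l1] M_mat_eq_pot[OF P l1 ab(2)] by simp
  have "ereal (lam * t + pot b - pot a) = (ereal 0 + ereal (lam * t + pot l - pot a)) + ereal (pot b - pot l)"
    by simp
  also have "\<dots> \<le> (C_mat n P a a + mp_pow n (S_mat n P) t a l) + R_mat n P l b"
    using Ca Rl St by (intro add_mono) auto
  also have "\<dots> \<le> mp_mult n (C_mat n P) (mp_pow n (S_mat n P) t) a l + R_mat n P l b"
    by (intro add_mono mp_mult_ge) (use ab in auto)
  also have "\<dots> \<le> CSR n P t a b" unfolding CSR_eq[OF mc] by (rule mp_mult_ge[OF l1])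
  finally show ?thesis .
qed

lemma CSR_X_Y_ham: "a \<in> {1..n} \<Longrightarrow> b \<in> {1..n} \<Longrightarrow> CSR n X t a b = CSR n Y t a b"
  using CSR_le_pot[OF between_X_Y_X] CSR_ge_pot[OF between_X_Y_X]
    CSR_le_pot[OF between_X_Y_Y] CSR_ge_pot[OF between_X_Y_Y]
  by (metis antisym)

end

section \<open>The case without critical arc \<open>(n, 1)\<close>\<close>

locale csr_non_ham = csr_setting +
  assumes not_crit_n_1: "\<not> crit_arc n A n 1"
begin

text \<open>Without the arc \<open>(n, 1)\<close> no critical arc leaves \<open>{g+1..n}\<close> towards \<open>{1..g}\<close>, so strong
  connectivity confines \<open>crit(A)\<close> to the cycle \<open>(1, \<dots>, g, 1)\<close>.\<close>

lemma crit_node_le_g: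
  assumes "crit_node n A v"
  shows "v \<le> g"
proof (rule ccontr)
  assume "\<not> v \<le> g"
  have "crit_node n A 1" using crit_arc_nodes[of n A g 1] crit_gcycle by auto
  hence "(v, 1) \<in> (crit_rel n A)\<^sup>*" using crit_sc assms unfolding crit_strongly_connected_def by blast
  then obtain x y where xy: "(x, y) \<in> crit_rel n A" "\<not> x \<le> g" "y \<le> g"
    using rtrancl_crossing[of v 1 "crit_rel n A" "\<lambda>z. z \<le> g"] \<open>\<not> v \<le> g\<close> g_pos by auto
  have ca: "crit_arc n A x y" using xy unfolding crit_rel_def by auto
  have "x = n \<and> y = 1" using crit_arc_shape_A[OF ca] xy unfolding crit_arc_shape_def by auto
  thus False using ca not_crit_n_1 by simp
qed

lemma crit_arc_iff_gcyc_arc: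
  assumes P: "keeps_gcyc P"
  shows "crit_arc n P x y \<longleftrightarrow> gcyc_arc x y"
proof
  assume "crit_arc n P x y"
  hence ca: "crit_arc n A x y"
    using crit_arc_submat[of P A] P mcm_keeps_gcyc[OF P] mcm_eq_lam unfolding keeps_gcyc_def by auto
  have "x \<le> g" "y \<le> g" using crit_arc_nodes[OF ca] crit_node_le_g by auto
  moreover have "1 \<le> x" "1 \<le> y" using crit_arc_props[OF ca] by auto
  ultimately show "gcyc_arc x y" using crit_arc_shape_A[OF ca] g_le unfolding crit_arc_shape_def gcyc_arc_cases by auto
qed (rule gcyc_arc_crit_keeps_gcyc[OF P])

lemma crit_node_iff_le_g:
  assumes P: "keeps_gcyc P"
  shows "crit_node n P v \<longleftrightarrow> v \<in> {1..g}"
proof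
  assume "crit_node n P v"
  hence "crit_node n A v"
    using crit_node_submat[of P A] P mcm_keeps_gcyc[OF P] mcm_eq_lam unfolding keeps_gcyc_def by auto
  moreover obtain c where "is_crit_cycle n A c" "v \<in> set c" using \<open>crit_node n A v\<close>
    unfolding crit_node_def by blast
  ultimately show "v \<in> {1..g}" using crit_node_le_g crit_cycle_nodes by fastforce
next
  assume "v \<in> {1..g}"
  hence "gcyc_arc v (gcyc v)" unfolding gcyc_arc_def by simp
  thus "crit_node n P v" using crit_arc_nodes crit_arc_iff_gcyc_arc[OF P] by blast
qed

lemma gcyc_arc_mod: "gcyc_arc x y \<Longrightarrow> y mod g = (x + 1) mod g"
  unfolding gcyc_arc_cases using mod_add_self1[of g 1] by auto

lemma cyclicity_eq_g:
  assumes P: "keeps_gcyc P"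
  shows "cyclicity_crit n P = g"
proof (rule cyclicity_crit_eq)
  show "crit_comps n P \<noteq> {}" using crit_node_iff_le_g[OF P, of 1] g_pos unfolding crit_comps_def by auto
  fix C assume "C \<in> crit_comps n P"
  then obtain i where i: "crit_node n P i" "C = crit_comp n P i" unfolding crit_comps_def by blast
  have "(a, b) \<in> (crit_rel n P)\<^sup>*" if "a \<in> {1..g}" "b \<in> {1..g}" for a b
    using up_cycle_reach[OF _ _ that] gcyc_arc_step crit_arc_iff_gcyc_arc[OF P] g_pos
    unfolding crit_rel_def by simp
  hence sub: "{1..g} \<subseteq> C" unfolding i(2) crit_comp_def using crit_node_iff_le_g[OF P] i(1) by auto
  have "g \<in> comp_cycle_lens n P C" using up_cycle_len_in_comp[OF gcyc_list_crit[OF P] _ sub] g_pos by simp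
  moreover have "g dvd s" if s: "s \<in> comp_cycle_lens n P C" for s
  proof -
    obtain c where c: "s = wlen c" "is_cycle n P c" "\<forall>l<wlen c. crit_arc n P (c ! l) (c ! Suc l)"
      using s unfolding comp_cycle_lens_def by blast
    have "\<forall>r<wlen c. (c ! Suc r) mod g = (c ! r + 1) mod g"
      using c(3) crit_arc_iff_gcyc_arc[OF P] gcyc_arc_mod by blast
    moreover have "c ! wlen c = c ! 0" using is_cycle_props(4)[OF c(2)] .
    ultimately have "wlen c mod g = 0" using mod_steps_closed[of "wlen c" "\<lambda>k. c ! k" g] by simp
    thus ?thesis using c(1) by auto
  qed
  ultimately show "Gcd (comp_cycle_lens n P C) = g" by (meson Gcd_dvd Gcd_greatest dvd_antisym)
qed

end

context csr_setting
begin

lemma B_jump_length_mod: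
  assumes "B x y \<noteq> -\<infinity>" "y > x + 1"
  shows "(y - x) mod g = 1 mod g"
proof -
  have "g dvd y - (x + 1)" using B_support[OF assms(1)] mod_eq_dvd_iff_nat[of "x + 1" y g] assms(2) by simp
  moreover have "y - x = 1 + (y - (x + 1))" using assms(2) by simp
  ultimately show ?thesis by (metis mod_add_right_eq dvd_imp_mod_0 add.right_neutral)
qed

text \<open>Each arc of \<open>A\<^sub>1 \<oplus> B\<^sub>1\<close> can be replaced by a walk without upward jumps whose length
  agrees modulo \<open>g\<close> and whose normalised weight is not smaller; for a forward \<open>B\<^sub>1\<close>-jump this
  is the walk in \<open>A\<^sub>1\<close> supplied by the hypothesis on \<open>A\<^sub>1\<^sup>j\<^sup>-\<^sup>i\<close>.\<close>

lemma Y_arc_replacement: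
  assumes xy: "x \<in> {1..n}" "y \<in> {1..n}" and Yxy: "Y x y \<noteq> -\<infinity>"
  shows "\<exists>l r. walk n Y r l \<and> no_jump r l \<and> r 0 = x \<and> r l = y \<and> l mod g = 1 mod g \<and>
    real_of_ereal (Y x y) - lam \<le> weight Y r l - lam * l"
proof (cases "y \<le> x + 1")
  case True
  define r where "r = (\<lambda>k::nat. if k = 0 then x else y)"
  have "walk n Y r 1" unfolding walk_def r_def using xy Yxy by (auto simp: le_Suc_eq)
  moreover have "no_jump r 1" unfolding no_jump_def r_def using True by simp
  moreover have "weight Y r 1 = real_of_ereal (Y x y)" unfolding weight_def r_def by simp
  moreover have "r 0 = x" "r 1 = y" unfolding r_def by simp_all
  ultimately show ?thesis by (intro exI[of _ 1] exI[of _ r]) simp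
next
  case False
  hence jump: "y > x + 1" by simp
  hence "X x y = -\<infinity>" using X_no_jump by fastforce
  hence b: "B x y \<noteq> -\<infinity>" using Y_support[OF Yxy] by blast
  have YA: "Y x y = A x y" using submat_Y_A Yxy unfolding submat_def by metis
  obtain u where u: "walk n X u (y - x)" "u 0 = x" "u (y - x) = y"
    "real_of_ereal (A x y) - lam < weight X u (y - x) - lam * (y - x)"
    using B_jump_X_walk[OF xy jump b] by blast
  have "no_jump u (y - x)" unfolding no_jump_def using u(1) X_no_jump unfolding walk_def by blast
  thus ?thesis using u walk_X_Y[OF u(1)] weight_X_Y[OF u(1)] B_jump_length_mod[OF b jump] YA
    by (intro exI[of _ "y - x"] exI[of _ u]) auto
qed

lemma remove_forward_jumps:
  "walk n Y f L \<Longrightarrow> \<exists>L' f'. walk n Y f' L' \<and> no_jump f' L' \<and> f' 0 = f 0 \<and> f' L' = f L \<and>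
      L' mod g = L mod g \<and> weight Y f L - lam * L \<le> weight Y f' L' - lam * L'"
proof (induction L)
  case 0 thus ?case by (intro exI[of _ 0] exI[of _ f]) (simp add: no_jump_def)
next
  case (Suc L)
  obtain L0 f0 where f0: "walk n Y f0 L0" "no_jump f0 L0" "f0 0 = f 0" "f0 L0 = f L"
      "L0 mod g = L mod g" "weight Y f L - lam * L \<le> weight Y f0 L0 - lam * L0"
    using Suc.IH[OF walk_prefix[OF Suc.prems]] by auto
  have Yf: "Y (f L) (f (Suc L)) \<noteq> -\<infinity>" "f L \<in> {1..n}" "f (Suc L) \<in> {1..n}"
    using Suc.prems unfolding walk_def by auto
  obtain l r where r: "walk n Y r l" "no_jump r l" "r 0 = f L" "r l = f (Suc L)" "l mod g = 1 mod g"
      "real_of_ereal (Y (f L) (f (Suc L))) - lam \<le> weight Y r l - lam * l"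
    using Y_arc_replacement[OF Yf(2,3,1)] by blast
  have e: "f0 L0 = r 0" using f0(4) r(3) by simp
  note app = walk_append[OF f0(1) r(1) e]
  have "(L0 + l) mod g = Suc L mod g" using f0(5) r(5) by (metis Suc_eq_plus1 mod_add_cong)
  moreover have "weight Y f (Suc L) - lam * Suc L \<le> weight Y (walk_append f0 L0 r) (L0 + l) - lam * (L0 + l)"
    using app(4) weight_Suc[of Y f L] f0(6) r(6) by (simp add: algebra_simps)
  ultimately show ?case using app(1-3) no_jump_append[OF f0(2) r(2) e] f0(3) r(4)
    by (intro exI[of _ "L0 + l"] exI[of _ "walk_append f0 L0 r"]) simp
qed

end

context csr_setting
begin

lemma B_arc_backward:
  assumes v: "walk n Y f L" and nj: "no_jump f L" and q: "q < L" "X (f q) (f (Suc q)) = -\<infinity>"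
  shows "g < f (Suc q)" "f (Suc q) \<le> f q" "f (Suc q) mod g = (f q + 1) mod g"
proof -
  have Yf: "Y (f q) (f (Suc q)) \<noteq> -\<infinity>" "f q \<in> {1..n}" "f (Suc q) \<in> {1..n}"
    using v q(1) unfolding walk_def by auto
  have Bf: "B (f q) (f (Suc q)) \<noteq> -\<infinity>" using Y_support[OF Yf(1)] q(2) by auto
  show "g < f (Suc q)" "f (Suc q) mod g = (f q + 1) mod g" using B_support[OF Bf] by auto
  have "f (Suc q) \<noteq> f q + 1"
  proof
    assume "f (Suc q) = f q + 1"
    hence "X (f q) (f (Suc q)) = A (f q) (f (Suc q))" using Yf by (intro X_eq_A) auto
    thus False using q(2) Bf B_support by simp
  qed
  moreover have "f (Suc q) \<le> f q + 1" using nj q(1) unfolding no_jump_def by simp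
  ultimately show "f (Suc q) \<le> f q" by simp
qed

lemma Y_segment_mod_g:
  assumes v: "walk n Y f L" and pq: "p \<le> q" "q \<le> L" "f p = f q"
    and no_wrap: "\<forall>r. p \<le> r \<and> r < q \<longrightarrow> \<not> (f r = n \<and> f (Suc r) = 1)"
  shows "(q - p) mod g = 0"
proof (rule mod_steps_closed)
  show "\<forall>r<q - p. walk_from f p (Suc r) mod g = (walk_from f p r + 1) mod g"
  proof (intro allI impI)
    fix r assume r: "r < q - p"
    have Yr: "Y (f (r + p)) (f (Suc (r + p))) \<noteq> -\<infinity>" using v r pq unfolding walk_def by auto
    show "walk_from f p (Suc r) mod g = (walk_from f p r + 1) mod g"
    proof -
      have "r + p < q" using r by simp
      thus ?thesis using Y_mod_step[OF Yr] no_wrap[rule_format, of "r + p"] by auto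
    qed
  qed
  show "walk_from f p (q - p) = walk_from f p 0" using pq by simp
qed

lemma Y_walk_enters_gcyc_via_n:
  assumes v: "walk n Y f L" and p: "p \<le> L" "f p > g" "f L \<le> g"
  shows "\<exists>r. p \<le> r \<and> r < L \<and> f r = n"
proof -
  obtain r where r: "r < L - p" "walk_from f p r > g" "walk_from f p (Suc r) \<le> g"
    using crossing_step[of g "walk_from f p" "L - p"] p by auto
  have "Y (f (r + p)) (f (Suc (r + p))) \<noteq> -\<infinity>" using v r(1) unfolding walk_def by auto
  hence "f (r + p) = n"
    using Y_support X_support[of "f (r + p)" "f (Suc (r + p))"] B_support[of "f (r + p)" "f (Suc (r + p))"] r(2,3)
    by auto
  thus ?thesis using r(1) by (intro exI[of _ "r + p"]) auto
qed

text \<open>Only the arc \<open>(n, 1)\<close> of \<open>A\<^sub>1 \<oplus> B\<^sub>1\<close> breaks the pattern \<open>j \<equiv> i + 1 (mod g)\<close>; after it a walk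
  without upward jumps has to climb through every node again, so a suitable extremal choice of
  the segment around a backward \<open>B\<^sub>1\<close>-arc avoids it.\<close>

lemma B_arc_segment_before:
  assumes v: "walk n Y f L" and nj: "no_jump f L" and q: "q < L" "X (f q) (f (Suc q)) = -\<infinity>"
    and start: "f 0 \<le> g"
  shows "\<exists>p\<le>q. f p = f (Suc q) \<and> (Suc q - p) mod g = 0"
proof -
  note b = B_arc_backward[OF v nj q]
  define S where "S = {p. p \<le> q \<and> f p = f (Suc q)}"
  have "\<exists>p. 0 \<le> p \<and> p \<le> q \<and> f p = f (Suc q)"
    by (rule no_jump_ivt[OF nj]) (use q start b in auto)
  hence "S \<noteq> {}" "finite S" unfolding S_def by auto
  define p where "p = Max S"
  have "p \<in> S" unfolding p_def using Max_in[OF \<open>finite S\<close> \<open>S \<noteq> {}\<close>] .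
  hence p: "p \<le> q" "f p = f (Suc q)" unfolding S_def by auto
  have pmax: "s \<le> p" if "s \<le> q" "f s = f (Suc q)" for s
    unfolding p_def using Max_ge[OF \<open>finite S\<close>, of s] that unfolding S_def by auto
  have "(Suc q - p) mod g = 0"
  proof (rule Y_segment_mod_g[OF v])
    show "p \<le> Suc q" "Suc q \<le> L" "f p = f (Suc q)" using p q(1) by auto
    show "\<forall>r. p \<le> r \<and> r < Suc q \<longrightarrow> \<not> (f r = n \<and> f (Suc r) = 1)"
    proof (intro allI impI notI)
      fix r assume r: "p \<le> r \<and> r < Suc q" and wrap: "f r = n \<and> f (Suc r) = 1"
      have "r \<noteq> q" using wrap b(1) g_pos by auto
      hence "Suc r \<le> q" using r by auto
      then obtain s where s: "Suc r \<le> s" "s \<le> q" "f s = f (Suc q)"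
        using no_jump_ivt[OF nj, of "Suc r" q "f (Suc q)"] wrap b(1,2) q(1) by auto
      have "s \<le> p" by (rule pmax[OF s(2,3)])
      thus False using s(1) r by simp
    qed
  qed
  thus ?thesis using p by (intro exI[of _ p]) simp
qed

lemma B_arc_segment_after:
  assumes v: "walk n Y f L" and nj: "no_jump f L" and q: "q < L" "X (f q) (f (Suc q)) = -\<infinity>"
    and finish: "f L \<le> g"
  shows "\<exists>s. Suc q \<le> s \<and> s \<le> L \<and> f s = f q \<and> (s - q) mod g = 0"
proof -
  note b = B_arc_backward[OF v nj q]
  have fq: "f q \<le> n" using v q(1) unfolding walk_def by auto
  obtain r where r: "Suc q \<le> r" "r < L" "f r = n"
    using Y_walk_enters_gcyc_via_n[OF v _ b(1) finish] q(1) by auto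
  hence "\<exists>s. Suc q \<le> s \<and> s \<le> r \<and> f s = f q"
    using no_jump_ivt[OF nj, of "Suc q" r "f q"] b(2) fq by auto
  hence "\<exists>s. Suc q \<le> s \<and> s \<le> L \<and> f s = f q" using r(2) by auto
  define S where "S = {s. Suc q \<le> s \<and> s \<le> L \<and> f s = f q}"
  hence fin: "S \<noteq> {}" "finite S"
    using \<open>\<exists>s. Suc q \<le> s \<and> s \<le> L \<and> f s = f q\<close> by auto
  define s0 where "s0 = Min S"
  have "s0 \<in> S" unfolding s0_def using Min_in[OF fin(2,1)] .
  hence s0: "Suc q \<le> s0" "s0 \<le> L" "f s0 = f q" unfolding S_def by auto
  have smin: "s0 \<le> s" if "Suc q \<le> s" "s \<le> L" "f s = f q" for s
    unfolding s0_def using Min_le[OF fin(2), of s] that unfolding S_def by auto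
  have "(s0 - q) mod g = 0"
  proof (rule Y_segment_mod_g[OF v])
    show "q \<le> s0" "s0 \<le> L" "f q = f s0" using s0 by auto
    show "\<forall>r. q \<le> r \<and> r < s0 \<longrightarrow> \<not> (f r = n \<and> f (Suc r) = 1)"
    proof (intro allI impI notI)
      fix r assume r: "q \<le> r \<and> r < s0" and wrap: "f r = n \<and> f (Suc r) = 1"
      have "r \<noteq> q" using wrap b(1) g_pos by auto
      then obtain s where s: "Suc q \<le> s" "s \<le> r" "f s = f q"
        using no_jump_ivt[OF nj, of "Suc q" r "f q"] wrap r s0(2) b(2) fq by auto
      have "s0 \<le> s" using smin[OF s(1) _ s(3)] s(2) r s0(2) by simp
      thus False using s(2) r by simp
    qed
  qed
  thus ?thesis using s0 by (intro exI[of _ s0]) simp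
qed

lemma remove_B_arcs:
  "walk n Y f L \<Longrightarrow> no_jump f L \<Longrightarrow> f 0 \<le> g \<or> f L \<le> g \<Longrightarrow>
   \<exists>L' f'. walk n X f' L' \<and> f' 0 = f 0 \<and> f' L' = f L \<and> L' mod g = L mod g \<and>
      weight Y f L - lam * L \<le> weight X f' L' - lam * L'"
proof (induction L arbitrary: f rule: less_induct)
  case (less L f)
  show ?case
  proof (cases "\<forall>k<L. X (f k) (f (Suc k)) \<noteq> -\<infinity>")
    case True
    have "walk n X f L" using less.prems(1) True unfolding walk_def by blast
    thus ?thesis using weight_X_Y by (intro exI[of _ L] exI[of _ f]) simp
  next
    case False
    then obtain q where q: "q < L" "X (f q) (f (Suc q)) = -\<infinity>" by auto
    obtain p q' where pq: "p < q'" "q' \<le> L" "f p = f q'" "(q' - p) mod g = 0"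
    proof (cases "f 0 \<le> g")
      case True
      then obtain p where "p \<le> q" "f p = f (Suc q)" "(Suc q - p) mod g = 0"
        using B_arc_segment_before[OF less.prems(1,2) q] by auto
      thus ?thesis using that[of p "Suc q"] q(1) by simp
    next
      case False
      then obtain s where "Suc q \<le> s" "s \<le> L" "f s = f q" "(s - q) mod g = 0"
        using B_arc_segment_after[OF less.prems(1,2) q] less.prems(3) by auto
      thus ?thesis using that[of q s] by simp
    qed
    note cut = walk_cut[OF less.prems(1) less_imp_le[OF pq(1)] pq(2,3)]
    have short: "p + (L - q') < L" using pq by simp
    obtain L' f' where f': "walk n X f' L'" "f' 0 = f 0" "f' L' = f L" "L' mod g = (p + (L - q')) mod g"
        "weight Y (walk_cut f p q') (p + (L - q')) - lam * (p + (L - q')) \<le> weight X f' L' - lam * L'"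
      using less.IH[OF short cut(2) no_jump_cut[OF less.prems(2) less_imp_le[OF pq(1)] pq(2,3)]]
        cut(3,4) less.prems(3) by auto
    have "L = (p + (L - q')) + (q' - p)" using pq by simp
    hence "L mod g = (p + (L - q')) mod g" using pq(4) by (metis mod_add_right_eq add.right_neutral)
    thus ?thesis using f' weight_walk_cut_ge[OF submat_Y_A less.prems(1) less_imp_le[OF pq(1)] pq(2,3)]
      by (intro exI[of _ L'] exI[of _ f']) auto
  qed
qed

end

context csr_non_ham
begin

lemma cyclicity_X: "cyclicity_crit n X = g" by (rule cyclicity_eq_g[OF keeps_gcyc_X])
lemma cyclicity_Y: "cyclicity_crit n Y = g" by (rule cyclicity_eq_g[OF keeps_gcyc_Y])

lemma M_mat_X_le_Y:
  assumes ab: "a \<in> {1..n}" "b \<in> {1..n}"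
  shows "M_mat n X a b \<le> M_mat n Y a b"
proof (rule ereal_le_by_real_lower_bounds[OF M_mat_not_PInf[OF mcm_X no_PInf_X ab]])
  fix x assume "ereal x \<le> M_mat n X a b"
  hence "\<exists>m<n. \<exists>f. walk n X f (m * g) \<and> f 0 = a \<and> f (m * g) = b \<and> x \<le> weight X f (m * g) - lam * (m * g)"
    using M_mat_witness[OF mcm_X no_PInf_X ab] cyclicity_X by simp
  then obtain m f where f: "m < n" "walk n X f (m * g)" "f 0 = a" "f (m * g) = b"
      "x \<le> weight X f (m * g) - lam * (m * g)" by blast
  have "ereal x \<le> ereal (weight Y f (m * g) - lam * (m * g))" using f(5) weight_X_Y[OF f(2)] by simp
  also have "\<dots> \<le> M_mat n Y a b"
    using M_mat_ge_weight[OF mcm_Y no_PInf_Y f(1), of f] walk_X_Y[OF f(2)] f(3,4) cyclicity_Y by simp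
  finally show "ereal x \<le> M_mat n Y a b" .
qed

text \<open>A walk of \<open>A\<^sub>1 \<oplus> B\<^sub>1\<close> of length divisible by \<open>g\<close> with an end in \<open>{1..g}\<close> is
  dominated by a walk of \<open>A\<^sub>1\<close> with the same ends and length divisible by \<open>g\<close>: remove the
  forward jumps, then the backward \<open>B\<^sub>1\<close>-arcs, then shorten below \<open>n g\<close>.\<close>

lemma M_mat_Y_le_X:
  assumes ab: "a \<in> {1..n}" "b \<in> {1..n}" and near: "a \<le> g \<or> b \<le> g"
  shows "M_mat n Y a b \<le> M_mat n X a b"
proof (rule ereal_le_by_real_lower_bounds[OF M_mat_not_PInf[OF mcm_Y no_PInf_Y ab]])
  fix x assume "ereal x \<le> M_mat n Y a b"
  hence "\<exists>m<n. \<exists>f. walk n Y f (m * g) \<and> f 0 = a \<and> f (m * g) = b \<and> x \<le> weight Y f (m * g) - lam * (m * g)"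
    using M_mat_witness[OF mcm_Y no_PInf_Y ab] cyclicity_Y by simp
  then obtain m f where f: "walk n Y f (m * g)" "f 0 = a" "f (m * g) = b"
      "x \<le> weight Y f (m * g) - lam * (m * g)" by blast
  obtain L1 f1 where f1: "walk n Y f1 L1" "no_jump f1 L1" "f1 0 = a" "f1 L1 = b" "L1 mod g = 0"
      "weight Y f (m * g) - lam * (m * g) \<le> weight Y f1 L1 - lam * L1"
    using remove_forward_jumps[OF f(1)] f(2,3) by auto
  obtain L2 f2 where f2: "walk n X f2 L2" "f2 0 = a" "f2 L2 = b" "L2 mod g = 0"
      "weight Y f1 L1 - lam * L1 \<le> weight X f2 L2 - lam * L2"
    using remove_B_arcs[OF f1(1,2)] f1(3,4,5) near by auto
  have L2: "L2 = (L2 div g) * g" using f2(4) by (metis add.right_neutral mult.commute div_mult_mod_eq)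
  obtain m3 f3 where f3: "m3 < n" "walk n X f3 (m3 * g)" "f3 0 = a" "f3 (m3 * g) = b"
      "weight X f2 L2 - lam * L2 \<le> weight X f3 (m3 * g) - lam * (m3 * g)"
    using shorten_walk[OF submat_X_A, of f2 "L2 div g" g] f2(1,2,3) L2 by auto
  have "ereal x \<le> ereal (weight X f3 (m3 * g) - lam * (m3 * g))" using f(4) f1(6) f2(5) f3(5) by simp
  also have "\<dots> \<le> M_mat n X a b"
    using M_mat_ge_weight[OF mcm_X no_PInf_X f3(1), of f3] f3(2,3,4) cyclicity_X by simp
  finally show "ereal x \<le> M_mat n X a b" .
qed

lemma CSR_X_Y_non_ham:
  assumes ab: "a \<in> {1..n}" "b \<in> {1..n}"
  shows "CSR n X t a b = CSR n Y t a b"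
proof -
  have crit_arcs: "crit_arc n X x y \<longleftrightarrow> crit_arc n Y x y" for x y
    using crit_arc_iff_gcyc_arc[OF keeps_gcyc_X] crit_arc_iff_gcyc_arc[OF keeps_gcyc_Y] by simp
  have crit_nodes: "crit_node n X k \<longleftrightarrow> crit_node n Y k" for k
    using crit_node_iff_le_g[OF keeps_gcyc_X] crit_node_iff_le_g[OF keeps_gcyc_Y] by simp
  have S: "S_mat n X = S_mat n Y"
    using crit_arcs crit_arc_iff_gcyc_arc[OF keeps_gcyc_X] gcyc_arc_X gcyc_arc_Y
    unfolding S_mat_def by (intro ext) auto
  have M: "M_mat n X a' b' = M_mat n Y a' b'" if "a' \<in> {1..n}" "b' \<in> {1..n}" "a' \<le> g \<or> b' \<le> g" for a' b'
    using M_mat_X_le_Y[OF that(1,2)] M_mat_Y_le_X[OF that] by (rule antisym)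
  have C: "C_mat n X a k = C_mat n Y a k" if "k \<in> {1..n}" for k
    using M[OF ab(1) that] crit_nodes crit_node_iff_le_g[OF keeps_gcyc_X] unfolding C_mat_def by auto
  have R: "R_mat n X l b = R_mat n Y l b" if "l \<in> {1..n}" for l
    using M[OF that ab(2)] crit_nodes crit_node_iff_le_g[OF keeps_gcyc_X] unfolding R_mat_def by auto
  have "mp_mult n (C_mat n X) (mp_pow n (S_mat n X) t) a l = mp_mult n (C_mat n Y) (mp_pow n (S_mat n Y) t) a l"
    for l unfolding mp_mult_def S using C by (intro SUP_cong) auto
  thus ?thesis
    unfolding CSR_eq[OF mcm_X] CSR_eq[OF mcm_Y] mp_mult_def[of n "mp_mult n (C_mat n X) _"]
      mp_mult_def[of n "mp_mult n (C_mat n Y) _"]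
    using R by (intro SUP_cong) auto
qed

end

context csr_setting
begin

lemma CSR_X_Y: "a \<in> {1..n} \<Longrightarrow> b \<in> {1..n} \<Longrightarrow> CSR n X t a b = CSR n Y t a b"
proof (cases "crit_arc n A n 1")
  case True
  interpret csr_ham n A g by unfold_locales (rule True)
  show "a \<in> {1..n} \<Longrightarrow> b \<in> {1..n} \<Longrightarrow> ?thesis" by (rule CSR_X_Y_ham)
next
  case False
  interpret csr_non_ham n A g by unfold_locales (rule False)
  show "a \<in> {1..n} \<Longrightarrow> b \<in> {1..n} \<Longrightarrow> ?thesis" by (rule CSR_X_Y_non_ham)
qed

end

theorem lemmal:
  fixes n :: nat and A :: mpmat and g :: nat
  assumes entries: "\<forall>i\<in>{1..n}. \<forall>j\<in>{1..n}. A i j \<noteq> \<infinity>"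
    and lam: "mcm n A \<noteq> -\<infinity>"
    and g_def: "g = g_crit n A"
    and A2_less: "mp_sless n (A2_mat n g A) (CSR n (A1_mat n g A) 1)"
    and sc: "crit_strongly_connected n A"
    and cyc: "(\<forall>k. 1 \<le> k \<and> k < g \<longrightarrow> crit_arc n A k (k + 1)) \<and> crit_arc n A g 1"
    and cop: "coprime g n"
    and ineq: "\<forall>i\<in>{1..n}. \<forall>j\<in>{1..n}. i > g \<and> j > i + 1 \<and> j mod g = (i + 1) mod g \<longrightarrow>
                 sless (ereal (real (j - i - 1)) * mcm n A + B1_mat g A i j)
                       (mp_pow n (A1_mat n g A) (j - i) i j)"
  shows "\<forall>t \<ge> 1. \<forall>i\<in>{1..n}. \<forall>j\<in>{1..n}.
           CSR n (A1_mat n g A) t i j = CSR n (mp_add (A1_mat n g A) (B1_mat g A)) t i j"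
proof -
  interpret csr_setting n A g
    by unfold_locales (use entries lam A2_less sc cyc cop ineq in auto)
  show ?thesis using CSR_X_Y by blast
qed

end
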